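(* Let $d=d(n)$ be a positive integer with $d=O(\log n)$, let $\lambda=d^2+d$, and let $m=m(n)$ be a non-negative integer with $m=O((\log n)^2)$. Then \[ S_m=\big(1+O(d^2m^2/n)\big)\frac{\lambda^m}{m!}, \] where the implied constant does not depend on $n$.
   Context: Let $\pi\in\mathfrak{S}_n$ be uniformly random. For indices $i<j$ in $[n]$, the pair $(i,j)$ is a close pair if $|i-j|+|\pi(i)-\pi(j)|<d+2$. For $i\in[n-1]$ let $\mathbf{X}_i$ be the indicator of the event that there exists $j>i$ such that $(i,j)$ is a close pair. For $I\subseteq[n-1]$ let $\mathbf{X}_I=\prod_{i\in I}\mathbf{X}_i$, and for an integer $m\ge0$ let $S_m=\sum_{I\subseteq[n-1],\,|I|=m}\mathbb{E}[\mathbf{X}_I]$. *)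

theory Defs
  imports Complex_Main "HOL-Library.Landau_Symbols" "HOL-Combinatorics.Permutations"
begin

definition close_pair :: "nat \<Rightarrow> (nat \<Rightarrow> nat) \<Rightarrow> nat \<Rightarrow> nat \<Rightarrow> bool" where
  "close_pair d \<pi> i j \<longleftrightarrow>
     \<bar>int i - int j\<bar> + \<bar>int (\<pi> i) - int (\<pi> j)\<bar> < int d + 2"

definition Xev :: "nat \<Rightarrow> nat \<Rightarrow> (nat \<Rightarrow> nat) \<Rightarrow> nat \<Rightarrow> bool" where
  "Xev n d \<pi> i \<longleftrightarrow> (\<exists>j\<in>{i<..n}. close_pair d \<pi> i j)"

definition EXI :: "nat \<Rightarrow> nat \<Rightarrow> nat set \<Rightarrow> real" where
  "EXI n d I = real (card {\<pi>. \<pi> permutes {1..n} \<and> (\<forall>i\<in>I. Xev n d \<pi> i)}) / fact n"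

definition Ssum :: "nat \<Rightarrow> nat \<Rightarrow> nat \<Rightarrow> real" where
  "Ssum n d m = (\<Sum>I \<in> {I. I \<subseteq> {1..<n} \<and> card I = m}. EXI n d I)"

end

theory Submission
  imports Defs "HOL-Real_Asymp.Real_Asymp"
begin

text \<open>
  X_i holds iff some offset (a, b) with a \<ge> 1, b \<noteq> 0 and a + |b| \<le> d + 1 is realised at i, that is
  \<pi>(i + a) = \<pi>(i) + b; there are \<lambda> = d^2 + d such offsets. Prescribing offsets at all i \<in> I fixes \<pi>
  on at most 2m points through m free values, so E[X_I] \<le> \<lambda>^m n^m (n - 2m)!/n!, and summing over the
  binom(n - 1, m) \<le> n^m/m! sets I gives the upper bound. For the lower bound only spread sets I are
  used (elements more than d + 1 apart and at most n - d - 1), which are all but a fraction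
  O(d m^2/n) of the m-sets. For them a Bonferroni inequality reduces E[X_I] to counts of
  permutations realising prescribed offsets; these are \<lambda>^m n^m (n - 2m)! up to collisions among the
  prescribed values and a second offset at one index, both of relative size O(d^2 m^2/n).
  Finally d = O(log n) and m = O(log^2 n) make d^2 m^2/n eventually small.
\<close>

section \<open>Counting permutations with prescribed values\<close>

lemma finite_permutes_Collect: "finite S \<Longrightarrow> finite {\<pi>. \<pi> permutes S \<and> P \<pi>}"
  by (rule finite_subset[OF _ finite_permutations]) auto

lemma permutes_extend_inj_on:
  assumes S: "finite S" and V: "V \<subseteq> S" and inj: "inj_on h V" and img: "h ` V \<subseteq> S"
  obtains \<pi> where "\<pi> permutes S" "\<forall>x\<in>V. \<pi> x = h x"
proof -
  have "card (S - V) = card (S - h ` V)"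
    using assms by (simp add: card_Diff_subset card_image finite_subset)
  then obtain g where g: "bij_betw g (S - V) (S - h ` V)"
    using finite_same_card_bij S by blast
  define p where "p x = (if x \<in> V then h x else if x \<in> S then g x else x)" for x
  have "bij_betw p V (h ` V)"
    using inj_on_imp_bij_betw[OF inj] by (rule bij_betw_cong[THEN iffD1, rotated]) (simp add: p_def)
  moreover have "bij_betw p (S - V) (S - h ` V)"
    using g by (rule bij_betw_cong[THEN iffD1, rotated]) (simp add: p_def)
  ultimately have "bij_betw p (V \<union> (S - V)) (h ` V \<union> (S - h ` V))"
    by (rule bij_betw_combine) auto
  moreover have "V \<union> (S - V) = S" "h ` V \<union> (S - h ` V) = S" using V img by auto
  ultimately have "p permutes S"
    by (intro bij_imp_permutes) (auto simp: p_def dest: subsetD[OF V])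
  then show ?thesis by (rule that) (simp add: p_def)
qed

lemma card_permutes_extending:
  assumes S: "finite S" and V: "V \<subseteq> S" and inj: "inj_on h V" and img: "h ` V \<subseteq> S"
  shows "card {\<pi>. \<pi> permutes S \<and> (\<forall>x\<in>V. \<pi> x = h x)} = fact (card S - card V)"
proof -
  obtain p where p: "p permutes S" "\<forall>x\<in>V. p x = h x"
    using permutes_extend_inj_on[OF assms] .
  define A where "A = {\<pi>. \<pi> permutes S \<and> (\<forall>x\<in>V. \<pi> x = h x)}"
  have "bij_betw ((\<circ>) p) {\<sigma>. \<sigma> permutes (S - V)} A"
  proof (rule bij_betw_imageI)
    show "inj_on ((\<circ>) p) {\<sigma>. \<sigma> permutes (S - V)}"
      using permutes_inj[OF p(1)] by (auto intro!: inj_onI simp: fun_eq_iff inj_def)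
    show "(\<circ>) p ` {\<sigma>. \<sigma> permutes (S - V)} = A"
    proof (intro equalityI subsetI)
      fix \<pi> assume "\<pi> \<in> (\<circ>) p ` {\<sigma>. \<sigma> permutes (S - V)}"
      then obtain \<sigma> where \<sigma>: "\<sigma> permutes (S - V)" "\<pi> = p \<circ> \<sigma>" by auto
      have "\<sigma> permutes S" using permutes_subset[OF \<sigma>(1)] by auto
      then show "\<pi> \<in> A"
        using \<sigma> p permutes_compose permutes_not_in[OF \<sigma>(1)] by (auto simp: A_def)
    next
      fix \<pi> assume \<pi>: "\<pi> \<in> A"
      define \<sigma> where "\<sigma> = inv p \<circ> \<pi>"
      have "\<sigma> permutes S"
        unfolding \<sigma>_def using permutes_inv[OF p(1)] \<pi> permutes_compose by (auto simp: A_def)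
      moreover have "\<forall>x\<in>V. \<sigma> x = x"
        using \<pi> p permutes_inverses(2)[OF p(1)] by (auto simp: A_def \<sigma>_def) metis
      ultimately have "\<sigma> permutes (S - V)" unfolding permutes_def by auto
      moreover have "\<pi> = p \<circ> \<sigma>"
        unfolding \<sigma>_def using permutes_inverses(1)[OF p(1)] by (auto simp: fun_eq_iff)
      ultimately show "\<pi> \<in> (\<circ>) p ` {\<sigma>. \<sigma> permutes (S - V)}" by blast
    qed
  qed
  then have "card A = card {\<sigma>. \<sigma> permutes (S - V)}" by (simp add: bij_betw_same_card)
  also have "\<dots> = fact (card S - card V)"
    using S V by (intro card_permutations) (auto simp: card_Diff_subset finite_subset)
  finally show ?thesis by (simp add: A_def)
qed

lemma card_eq_card_image_mult:
  assumes "finite A" "\<And>y. y \<in> f ` A \<Longrightarrow> card {x\<in>A. f x = y} = c"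
  shows "card A = card (f ` A) * c"
proof -
  have "card A = card (\<Union>y\<in>f ` A. {x\<in>A. f x = y})" by (rule arg_cong[where f = card]) auto
  also have "\<dots> = (\<Sum>y\<in>f ` A. card {x\<in>A. f x = y})"
    by (rule card_UN_disjoint) (use assms(1) in auto)
  also have "\<dots> = card (f ` A) * c" using assms(2) by simp
  finally show ?thesis .
qed

lemma card_permutes_restrict_image:
  assumes S: "finite S" and V: "V \<subseteq> S"
    and local: "\<And>\<pi> \<pi>'. \<forall>x\<in>V. \<pi> x = \<pi>' x \<Longrightarrow> P \<pi> \<Longrightarrow> P \<pi>'"
  shows "card {\<pi>. \<pi> permutes S \<and> P \<pi>}
         = card ((\<lambda>\<pi>. restrict \<pi> V) ` {\<pi>. \<pi> permutes S \<and> P \<pi>}) * fact (card S - card V)"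
proof (rule card_eq_card_image_mult[OF finite_permutes_Collect[OF S]])
  fix y assume "y \<in> (\<lambda>\<pi>. restrict \<pi> V) ` {\<pi>. \<pi> permutes S \<and> P \<pi>}"
  then obtain p where p: "p permutes S" "P p" "y = restrict p V" by auto
  have "{\<pi> \<in> {\<pi>. \<pi> permutes S \<and> P \<pi>}. restrict \<pi> V = y} = {\<pi>. \<pi> permutes S \<and> (\<forall>x\<in>V. \<pi> x = p x)}"
    using p local[of p] by (auto simp: restrict_def fun_eq_iff)
  also have "card \<dots> = fact (card S - card V)"
  proof (rule card_permutes_extending[OF S V])
    show "inj_on p V" using permutes_inj[OF p(1)] inj_on_subset by blast
    show "p ` V \<subseteq> S" using V permutes_in_image[OF p(1)] by auto
  qed
  finally show "card {\<pi> \<in> {\<pi>. \<pi> permutes S \<and> P \<pi>}. restrict \<pi> V = y} = fact (card S - card V)" .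
qed

lemma card_permutes_determined_le:
  assumes S: "finite S" and V: "V \<subseteq> S" and R: "R \<subseteq> V"
    and local: "\<And>\<pi> \<pi>'. \<forall>x\<in>V. \<pi> x = \<pi>' x \<Longrightarrow> P \<pi> \<Longrightarrow> P \<pi>'"
    and determined: "\<And>\<pi> \<pi>'. \<pi> permutes S \<Longrightarrow> P \<pi> \<Longrightarrow> \<pi>' permutes S \<Longrightarrow> P \<pi>'
               \<Longrightarrow> \<forall>x\<in>R. \<pi> x = \<pi>' x \<Longrightarrow> \<forall>x\<in>V. \<pi> x = \<pi>' x"
  shows "card {\<pi>. \<pi> permutes S \<and> P \<pi>} \<le> card S ^ card R * fact (card S - card V)"
proof -
  define A where "A = {\<pi>. \<pi> permutes S \<and> P \<pi>}"
  have finR: "finite R" using R V S by (meson finite_subset subset_trans)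
  have "card ((\<lambda>\<pi>. restrict \<pi> V) ` A) \<le> card (R \<rightarrow>\<^sub>E S)"
  proof (rule card_inj_on_le[where f = "\<lambda>h. restrict h R"])
    show "inj_on (\<lambda>h. restrict h R) ((\<lambda>\<pi>. restrict \<pi> V) ` A)"
    proof (rule inj_onI)
      fix h h' assume "h \<in> (\<lambda>\<pi>. restrict \<pi> V) ` A" "h' \<in> (\<lambda>\<pi>. restrict \<pi> V) ` A"
        and eq: "restrict h R = restrict h' R"
      then obtain p p' where p: "p \<in> A" "p' \<in> A" and h: "h = restrict p V" "h' = restrict p' V"
        by blast
      have "\<forall>x\<in>R. p x = p' x"
      proof
        fix x assume "x \<in> R"
        then show "p x = p' x" using R fun_cong[OF eq, of x] h by auto
      qed
      then have "\<forall>x\<in>V. p x = p' x" using determined p unfolding A_def by blast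
      then show "h = h'" using h by (auto simp: fun_eq_iff)
    qed
    show "(\<lambda>h. restrict h R) ` (\<lambda>\<pi>. restrict \<pi> V) ` A \<subseteq> R \<rightarrow>\<^sub>E S"
      using R V permutes_in_image unfolding A_def by fastforce
    show "finite (R \<rightarrow>\<^sub>E S)" using finR S by (rule finite_PiE)
  qed
  also have "\<dots> = card S ^ card R" using finR by (simp add: card_PiE)
  finally have "card ((\<lambda>\<pi>. restrict \<pi> V) ` A) * fact (card S - card V)
      \<le> card S ^ card R * fact (card S - card V)" by (rule mult_right_mono) simp
  then show ?thesis
    using card_permutes_restrict_image[OF S V local] by (simp only: A_def)
qed

section \<open>Factorial and binomial estimates\<close>

lemma power_mult_fact_diff_mono:
  fixes n :: nat
  assumes "v \<le> u" "u \<le> n"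
  shows "n ^ v * fact (n - v) \<le> (n ^ u * fact (n - u) :: nat)"
  using assms
proof (induction u rule: dec_induct)
  case base then show ?case by simp
next
  case (step u)
  obtain k where k: "n - u = Suc k" "n - Suc u = k" using step by (metis Suc_diff_Suc Suc_le_eq diff_Suc_1)
  have kn: "Suc k \<le> n" using k by arith
  have f: "fact (n - u) \<le> n * (fact (n - Suc u) :: nat)"
  proof -
    have "fact (Suc k) = Suc k * (fact k :: nat)" by simp
    also have "\<dots> \<le> n * fact k" using kn by (rule mult_le_mono1)
    finally show ?thesis unfolding k .
  qed
  have "n ^ v * fact (n - v) \<le> n ^ u * (fact (n - u) :: nat)" using step by simp
  also have "\<dots> \<le> n ^ u * (n * fact (n - Suc u))" using f by (rule mult_left_mono) simp
  also have "\<dots> = n ^ Suc u * fact (n - Suc u)" by simp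
  finally show ?case .
qed

lemma fact_eq_fact_diff_mult_prod:
  fixes n :: nat
  assumes "v \<le> n"
  shows "(fact n :: real) = fact (n - v) * (\<Prod>k<v. real n - real k)"
  using assms
proof (induction v)
  case 0 then show ?case by simp
next
  case (Suc v)
  obtain j where j: "n - v = Suc j" "n - Suc v = j" using Suc.prems by (metis Suc_diff_Suc Suc_le_eq diff_Suc_1)
  have "(fact (n - v) :: real) = fact (n - Suc v) * (real n - real v)"
    unfolding j using j Suc.prems by (simp add: of_nat_diff[symmetric])
  then show ?case using Suc by (simp add: mult.assoc)
qed

lemma prod_diff_le_power:
  fixes n :: nat
  assumes "v \<le> n"
  shows "(\<Prod>k<v. real n - real k) \<le> real n ^ v"
proof -
  have "(\<Prod>k<v. real n - real k) \<le> (\<Prod>k<v. real n)"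
    by (rule prod_mono) (use assms in auto)
  then show ?thesis by simp
qed

lemma prod_diff_ge_power:
  fixes n :: nat
  assumes "v \<le> n" "n > 0"
  shows "(\<Prod>k<v. real n - real k) \<ge> real n ^ v * (1 - real v ^ 2 / (2 * real n))"
  using assms(1)
proof (induction v)
  case (Suc v)
  have n0: "real n > 0" using assms(2) by simp
  have "(1 - real v ^ 2 / (2 * real n)) * (1 - real v / real n) - (1 - real (Suc v) ^ 2 / (2 * real n))
      = (1 + real v ^ 3 / real n) / (2 * real n)"
    using n0 by (simp add: field_simps power2_eq_square power3_eq_cube)
  moreover have "(1 + real v ^ 3 / real n) / (2 * real n) \<ge> 0" using n0 by simp
  ultimately have "1 - real (Suc v) ^ 2 / (2 * real n) \<le> (1 - real v ^ 2 / (2 * real n)) * (1 - real v / real n)"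
    by linarith
  then have "real n ^ Suc v * (1 - real (Suc v) ^ 2 / (2 * real n))
      \<le> real n ^ Suc v * ((1 - real v ^ 2 / (2 * real n)) * (1 - real v / real n))"
    by (intro mult_left_mono) auto
  also have "\<dots> = real n ^ v * (1 - real v ^ 2 / (2 * real n)) * (real n - real v)"
    using n0 by (simp add: field_simps)
  also have "\<dots> \<le> (\<Prod>k<v. real n - real k) * (real n - real v)"
    using Suc by (intro mult_right_mono) auto
  finally show ?case by simp
qed simp

lemma power_mult_fact_diff_le:
  fixes n :: nat
  assumes "v \<le> n" "n > 0" "real v ^ 2 \<le> real n"
  shows "real n ^ v * fact (n - v) \<le> fact n * (1 + 2 * real v ^ 2 / real n)"
proof -
  define x where "x = real v ^ 2 / (2 * real n)"
  define F where "F = real n ^ v * fact (n - v)"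
  have x: "0 \<le> x" "x \<le> 1/2" using assms by (auto simp: x_def field_simps)
  have F_le: "F * (1 - x) \<le> fact n"
    using prod_diff_ge_power[OF assms(1,2)] fact_eq_fact_diff_mult_prod[OF assms(1)]
    by (simp add: F_def x_def mult_left_mono mult.commute mult.left_commute)
  have "1 \<le> (1 - x) * (1 + 4 * x)"
  proof -
    have "(1 - x) * (1 + 4 * x) = 1 + x * (3 - 4 * x)" by algebra
    moreover have "x * (3 - 4 * x) \<ge> 0" using x by (intro mult_nonneg_nonneg) auto
    ultimately show ?thesis by linarith
  qed
  then have "F * 1 \<le> F * ((1 - x) * (1 + 4 * x))" by (rule mult_left_mono) (simp add: F_def)
  also have "\<dots> = F * (1 - x) * (1 + 4 * x)" by (simp only: mult.assoc)
  also have "\<dots> \<le> fact n * (1 + 4 * x)" using F_le x by (intro mult_right_mono) auto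
  finally show ?thesis by (simp add: F_def x_def)
qed

lemma shifted_power_minus_ge:
  fixes n d m :: nat
  assumes dn: "2 * d \<le> n" and m1: "1 \<le> m" and n0: "0 < n"
  shows "real n ^ m * (1 - (2 * real d * real m + 3 * real m ^ 2) / real n)
         \<le> real (n - 2 * d) ^ m - 3 * real m ^ 2 * real (n - 2 * d) ^ (m - 1)"
proof -
  define s where "s = real (n - 2 * d)"
  have s: "s = real n * (1 - 2 * real d / real n)" using dn n0 by (simp add: s_def of_nat_diff field_simps)
  have "-1 \<le> - (2 * real d / real n)" using dn n0 by (simp add: field_simps)
  from Bernoulli_inequality[OF this, of m]
  have "1 - 2 * real d * real m / real n \<le> (1 - 2 * real d / real n) ^ m" by (simp add: algebra_simps)
  then have "real n ^ m * (1 - 2 * real d * real m / real n) \<le> real n ^ m * (1 - 2 * real d / real n) ^ m"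
    by (rule mult_left_mono) simp
  then have A: "real n ^ m * (1 - 2 * real d * real m / real n) \<le> s ^ m"
    by (simp add: s power_mult_distrib)
  have "s ^ (m - 1) \<le> real n ^ (m - 1)" by (intro power_mono) (auto simp: s_def)
  then have "3 * real m ^ 2 * s ^ (m - 1) \<le> 3 * real m ^ 2 * real n ^ (m - 1)" by (simp add: mult_left_mono)
  also have "\<dots> = real n ^ m * (3 * real m ^ 2 / real n)"
    using m1 n0 by (cases m) (simp_all add: field_simps)
  finally have B: "3 * real m ^ 2 * s ^ (m - 1) \<le> real n ^ m * (3 * real m ^ 2 / real n)" .
  have "real n ^ m * (1 - (2 * real d * real m + 3 * real m ^ 2) / real n)
      = real n ^ m * (1 - 2 * real d * real m / real n) - real n ^ m * (3 * real m ^ 2 / real n)"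
    by (simp add: add_divide_distrib algebra_simps)
  then show ?thesis using A B unfolding s_def by linarith
qed

lemma power_mult_fact_diff_le_twice:
  fixes n v :: nat
  assumes "v \<le> n" "2 * real v ^ 2 \<le> real n"
  shows "real n ^ v * fact (n - v) \<le> 2 * fact n"
proof (cases "n = 0")
  case False
  have "real v ^ 2 \<le> real n" using assms(2) zero_le_power2[of "real v"] by linarith
  with False have "real n ^ v * fact (n - v) \<le> fact n * (1 + 2 * real v ^ 2 / real n)"
    using assms(1) by (intro power_mult_fact_diff_le) auto
  also have "\<dots> \<le> fact n * 2" using assms False by (intro mult_left_mono) (auto simp: field_simps)
  finally show ?thesis by simp
qed (use assms in simp)

lemma fact_le_power_mult_fact_diff:
  fixes n :: nat
  assumes "v \<le> n"
  shows "(fact n :: real) \<le> real n ^ v * fact (n - v)"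
proof -
  have "(fact n :: real) = fact (n - v) * (\<Prod>k<v. real n - real k)" by (rule fact_eq_fact_diff_mult_prod[OF assms])
  also have "\<dots> \<le> fact (n - v) * real n ^ v" by (rule mult_left_mono[OF prod_diff_le_power[OF assms]]) simp
  finally show ?thesis by (simp add: mult.commute)
qed

lemma binomial_le_power_div_fact: "real (a choose k) \<le> real a ^ k / fact k"
proof -
  have "(a choose k) * fact k \<le> a ^ k" by (rule binomial_fact_pow)
  then have "real ((a choose k) * fact k) \<le> real (a ^ k)" by (simp only: of_nat_le_iff)
  then have "real (a choose k) * fact k \<le> real a ^ k" by simp
  then show ?thesis by (simp add: field_simps)
qed

lemma binomial_pred_ge:
  fixes n m :: nat
  assumes m1: "1 \<le> m" and sq: "real (m + 1) ^ 2 \<le> real n"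
  shows "real ((n - 1) choose m) \<ge> real n ^ m / fact m * (1 - 2 * real m ^ 2 / real n)"
proof -
  have "real (m + 1) \<le> real (m + 1) ^ 2" by (simp add: power2_eq_square)
  then have mn: "m + 1 \<le> n" using sq by linarith
  then have n0: "real n > 0" by simp
  have "real (m + 1) ^ 2 \<le> (2 * real m) ^ 2" using m1 by (intro power_mono) auto
  then have "real (m + 1) ^ 2 / (2 * real n) \<le> 2 * real m ^ 2 / real n"
    using n0 by (simp add: field_simps power_mult_distrib)
  then have "real n ^ (m + 1) * (1 - 2 * real m ^ 2 / real n)
      \<le> real n ^ (m + 1) * (1 - real (m + 1) ^ 2 / (2 * real n))"
    by (intro mult_left_mono) auto
  then have "real n * (real n ^ m / fact m * (1 - 2 * real m ^ 2 / real n))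
      \<le> real n ^ (m + 1) * (1 - real (m + 1) ^ 2 / (2 * real n)) / fact m"
    by (simp add: divide_right_mono mult.assoc)
  also have "\<dots> \<le> (\<Prod>k<m + 1. real n - real k) / fact m"
    using prod_diff_ge_power[OF mn] n0 by (intro divide_right_mono) auto
  also have "\<dots> = fact n / (fact m * fact (n - (m + 1)))"
    using fact_eq_fact_diff_mult_prod[OF mn] by simp
  also have "\<dots> = real n * real ((n - 1) choose m)"
    using mn by (cases n) (simp_all add: binomial_fact)
  finally show ?thesis using n0 by (simp only: mult_le_cancel_left_pos)
qed

lemma finite_subsets_Collect: "finite A \<Longrightarrow> finite {J. J \<subseteq> A \<and> P J}"
  by (rule finite_subset[of _ "Pow A"]) auto

lemma card_index_sets: "card {I. I \<subseteq> {1..<n} \<and> card I = m} = (n - 1) choose m"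
  using n_subsets[of "{1..<n}" m] by simp

lemma finite_index_sets: "finite {I. I \<subseteq> {1..<(n::nat)} \<and> card I = m}"
  by (rule finite_subsets_Collect) simp

lemma card_subsets_containing:
  assumes A: "finite A" and B: "B \<subseteq> A" "card B \<le> m"
  shows "card {I. I \<subseteq> A \<and> card I = m \<and> B \<subseteq> I} = (card A - card B) choose (m - card B)"
proof -
  have finB: "finite B" using A B(1) by (rule finite_subset[rotated])
  have "bij_betw (\<lambda>I. I - B) {I. I \<subseteq> A \<and> card I = m \<and> B \<subseteq> I} {J. J \<subseteq> A - B \<and> card J = m - card B}"
  proof (rule bij_betw_byWitness[where f' = "\<lambda>J. J \<union> B"])
    show "\<forall>I\<in>{I. I \<subseteq> A \<and> card I = m \<and> B \<subseteq> I}. I - B \<union> B = I" by auto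
    show "\<forall>J\<in>{J. J \<subseteq> A - B \<and> card J = m - card B}. J \<union> B - B = J" by auto
    show "(\<lambda>I. I - B) ` {I. I \<subseteq> A \<and> card I = m \<and> B \<subseteq> I} \<subseteq> {J. J \<subseteq> A - B \<and> card J = m - card B}"
      using A by (auto simp: card_Diff_subset finB dest: finite_subset)
    show "(\<lambda>J. J \<union> B) ` {J. J \<subseteq> A - B \<and> card J = m - card B} \<subseteq> {I. I \<subseteq> A \<and> card I = m \<and> B \<subseteq> I}"
    proof (intro subsetI, elim imageE)
      fix J I assume "J \<in> {J. J \<subseteq> A - B \<and> card J = m - card B}" "I = J \<union> B"
      moreover have "finite J" using \<open>J \<in> _\<close> A by (auto intro: finite_subset)
      moreover have "J \<inter> B = {}" using \<open>J \<in> _\<close> by auto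
      ultimately show "I \<in> {I. I \<subseteq> A \<and> card I = m \<and> B \<subseteq> I}"
        using B finB by (auto simp: card_Un_disjoint)
    qed
  qed
  then have "card {I. I \<subseteq> A \<and> card I = m \<and> B \<subseteq> I} = card {J. J \<subseteq> A - B \<and> card J = m - card B}"
    by (rule bij_betw_same_card)
  also have "\<dots> = (card A - card B) choose (m - card B)"
    using A B(1) finB by (simp add: n_subsets card_Diff_subset)
  finally show ?thesis .
qed

lemma card_subsets_containing_point_le:
  "card {I. I \<subseteq> {1..<n} \<and> card I = m \<and> x \<in> I} \<le> (n - 2) choose (m - 1)"
proof (cases "x \<in> {1..<n} \<and> 1 \<le> m")
  case True
  then show ?thesis using card_subsets_containing[of "{1..<n}" "{x}" m] by (simp add: numeral_2_eq_2)
next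
  case False
  have "{I. I \<subseteq> {1..<n} \<and> card I = m \<and> x \<in> I} = {}"
  proof (rule ccontr)
    assume "{I. I \<subseteq> {1..<n} \<and> card I = m \<and> x \<in> I} \<noteq> {}"
    then obtain I where I: "I \<subseteq> {1..<n}" "card I = m" "x \<in> I" by blast
    have "card {x} \<le> card I" using I by (intro card_mono) (auto dest: finite_subset)
    then show False using False I by auto
  qed
  then show ?thesis by (simp only: card.empty)
qed

lemma card_subsets_containing_pair_le:
  assumes "x \<noteq> y"
  shows "card {I. I \<subseteq> {1..<n} \<and> card I = m \<and> x \<in> I \<and> y \<in> I}
         \<le> (if 2 \<le> m then (n - 3) choose (m - 2) else 0)"
proof (cases "{x, y} \<subseteq> {1..<n} \<and> 2 \<le> m")
  case True
  then show ?thesis using assms card_subsets_containing[of "{1..<n}" "{x, y}" m]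
    by (simp add: numeral_2_eq_2 numeral_3_eq_3)
next
  case False
  have "{I. I \<subseteq> {1..<n} \<and> card I = m \<and> x \<in> I \<and> y \<in> I} = {}"
  proof (rule ccontr)
    assume "{I. I \<subseteq> {1..<n} \<and> card I = m \<and> x \<in> I \<and> y \<in> I} \<noteq> {}"
    then obtain I where I: "I \<subseteq> {1..<n}" "card I = m" "x \<in> I" "y \<in> I" by blast
    have "card {x, y} \<le> card I" using I by (intro card_mono) (auto dest: finite_subset)
    then show False using False assms I by auto
  qed
  then show ?thesis by (simp only: card.empty)
qed

lemma binomial_diff2_le:
  fixes n m :: nat
  assumes "1 \<le> m" "1 \<le> n"
  shows "real ((n - 2) choose (m - 1)) \<le> real n ^ m / fact m * (real m / real n)"
proof -
  obtain k where k: "m = Suc k" using assms by (cases m) auto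
  have "real ((n - 2) choose k) \<le> real (n - 2) ^ k / fact k" by (rule binomial_le_power_div_fact)
  also have "\<dots> \<le> real n ^ k / fact k" by (intro divide_right_mono power_mono) auto
  also have "\<dots> = real n ^ Suc k / fact (Suc k) * (real (Suc k) / real n)"
    using assms by (simp add: divide_simps del: of_nat_Suc)
  finally show ?thesis using k by simp
qed

lemma binomial_diff3_le:
  fixes n m :: nat
  assumes "1 \<le> n"
  shows "real (if 2 \<le> m then (n - 3) choose (m - 2) else 0) \<le> real n ^ m / fact m * (real m ^ 2 / real n ^ 2)"
proof (cases "2 \<le> m")
  case True
  obtain k where k: "m = Suc (Suc k)" using True by (metis add_2_eq_Suc le_Suc_ex)
  have "real ((n - 3) choose k) \<le> real (n - 3) ^ k / fact k" by (rule binomial_le_power_div_fact)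
  also have "\<dots> \<le> real n ^ k / fact k" by (intro divide_right_mono power_mono) auto
  also have "\<dots> \<le> real n ^ k / fact k * ((real k + 2) / (real k + 1))"
    by (rule mult_le_cancel_left1[THEN iffD2]) (simp add: not_less)
  also have "\<dots> = real n ^ Suc (Suc k) / fact (Suc (Suc k)) * (real (Suc (Suc k)) ^ 2 / real n ^ 2)"
    using assms by (simp add: divide_simps power2_eq_square del: of_nat_Suc) (simp add: algebra_simps)
  finally show ?thesis using k True by simp
qed simp

section \<open>Close pairs as realised offsets\<close>

text \<open>The close pair (i, i + a) with \<pi>(i + a) = \<pi>(i) + b is recorded as the offset (a, b) at i.\<close>

definition offsets :: "nat \<Rightarrow> (nat \<times> int) set" where
  "offsets d = {(a, b). 1 \<le> a \<and> b \<noteq> 0 \<and> int a + \<bar>b\<bar> \<le> int d + 1}"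

definition realises_offset :: "nat \<Rightarrow> (nat \<Rightarrow> nat) \<Rightarrow> nat \<Rightarrow> nat \<times> int \<Rightarrow> bool" where
  "realises_offset n \<pi> i w \<longleftrightarrow> i + fst w \<le> n \<and> int (\<pi> (i + fst w)) = int (\<pi> i) + snd w"

lemma offsets_eq_Sigma:
  "offsets d = Sigma {1..d+1} (\<lambda>a. {-(int (d+1) - int a)..-1} \<union> {1..int (d+1) - int a})"
  by (auto simp: offsets_def abs_if)

lemma finite_offsets: "finite (offsets d)"
  by (simp add: offsets_eq_Sigma)

lemma card_offsets: "card (offsets d) = d * d + d"
proof -
  have "card (offsets d) = (\<Sum>a=1..d+1. card ({-(int (d+1) - int a)..-1} \<union> {1..int (d+1) - int a}))"
    unfolding offsets_eq_Sigma by (rule card_SigmaI) auto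
  also have "\<dots> = (\<Sum>a=1..d+1. 2 * (d + 1 - a))"
    by (intro sum.cong refl, subst card_Un_disjoint) auto
  also have "\<dots> = (\<Sum>k=0..d. 2 * k)"
    by (rule sum.reindex_bij_witness[where i = "\<lambda>k. d + 1 - k" and j = "\<lambda>a. d + 1 - a"]) auto
  also have "\<dots> = d * d + d"
    by (induction d) auto
  finally show ?thesis .
qed

lemma offsets_bounds:
  "w \<in> offsets d \<Longrightarrow> 1 \<le> fst w \<and> fst w \<le> d + 1 \<and> snd w \<noteq> 0 \<and> \<bar>snd w\<bar> \<le> int d"
  by (auto simp: offsets_def)

lemma Xev_iff_ex_offset:
  assumes "\<pi> permutes {1..n}"
  shows "Xev n d \<pi> i \<longleftrightarrow> (\<exists>w\<in>offsets d. realises_offset n \<pi> i w)"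
proof
  assume "Xev n d \<pi> i"
  then obtain j where j: "j \<in> {i<..n}" "close_pair d \<pi> i j" by (auto simp: Xev_def)
  have "\<pi> j \<noteq> \<pi> i" using permutes_inj[OF assms] j(1) by (auto simp: inj_def)
  then have "(j - i, int (\<pi> j) - int (\<pi> i)) \<in> offsets d"
    "realises_offset n \<pi> i (j - i, int (\<pi> j) - int (\<pi> i))"
    using j by (auto simp: offsets_def realises_offset_def close_pair_def)
  then show "\<exists>w\<in>offsets d. realises_offset n \<pi> i w" by blast
next
  assume "\<exists>w\<in>offsets d. realises_offset n \<pi> i w"
  then obtain a b where "(a, b) \<in> offsets d" "realises_offset n \<pi> i (a, b)" by auto
  then have "i + a \<in> {i<..n}" "close_pair d \<pi> i (i + a)"
    by (auto simp: offsets_def realises_offset_def close_pair_def)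
  then show "Xev n d \<pi> i" by (auto simp: Xev_def)
qed

section \<open>Upper bound\<close>

definition offset_perms :: "nat \<Rightarrow> nat set \<Rightarrow> (nat \<Rightarrow> nat \<times> int) \<Rightarrow> (nat \<Rightarrow> nat) set" where
  "offset_perms n I w = {\<pi>. \<pi> permutes {1..n} \<and> (\<forall>i\<in>I. realises_offset n \<pi> i (w i))}"

lemma finite_offset_perms: "finite (offset_perms n I w)"
  unfolding offset_perms_def by (rule finite_permutes_Collect) simp

text \<open>A largest index where two such permutations differ would pass the difference on to its target,
  which is larger.\<close>

lemma realised_offsets_agree:
  assumes I: "finite I" and pos: "\<forall>i\<in>I. 1 \<le> fst (w i)"
    and \<pi>: "\<forall>i\<in>I. realises_offset n \<pi> i (w i)" and \<pi>': "\<forall>i\<in>I. realises_offset n \<pi>' i (w i)"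
    and agree: "\<forall>i\<in>I. i + fst (w i) \<notin> I \<longrightarrow> \<pi> (i + fst (w i)) = \<pi>' (i + fst (w i))"
  shows "\<forall>i\<in>I. \<pi> i = \<pi>' i"
proof (rule ccontr)
  define D where "D = {i\<in>I. \<pi> i \<noteq> \<pi>' i}"
  assume "\<not> (\<forall>i\<in>I. \<pi> i = \<pi>' i)"
  then have D: "D \<noteq> {}" "finite D" using I by (auto simp: D_def)
  define i where "i = Max D"
  define j where "j = i + fst (w i)"
  have i: "i \<in> D" using Max_in[OF D(2,1)] by (simp add: i_def)
  have "\<pi> j = \<pi>' j"
  proof (cases "j \<in> I")
    case True
    have "i < j" using pos i by (auto simp: D_def j_def)
    then have "j \<notin> D" using Max_ge[OF D(2), of j] by (auto simp: i_def)
    then show ?thesis using True by (simp add: D_def)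
  qed (use agree i in \<open>auto simp: D_def j_def\<close>)
  moreover have "int (\<pi> j) = int (\<pi> i) + snd (w i)" "int (\<pi>' j) = int (\<pi>' i) + snd (w i)"
    using \<pi> \<pi>' i by (auto simp: D_def realises_offset_def j_def)
  ultimately show False using i by (simp add: D_def)
qed

lemma card_offset_perms_le:
  fixes n :: nat
  assumes I: "I \<subseteq> {1..n}" and pos: "\<forall>i\<in>I. 1 \<le> fst (w i)" and m: "card I = m" and mn: "2 * m \<le> n"
  shows "card (offset_perms n I w) \<le> n ^ m * fact (n - 2 * m)"
proof (cases "\<forall>i\<in>I. i + fst (w i) \<le> n")
  case False
  then have "offset_perms n I w = {}" by (auto simp: offset_perms_def realises_offset_def)
  then show ?thesis by simp
next
  case True
  define V where "V = I \<union> (\<lambda>i. i + fst (w i)) ` I"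
  have finI: "finite I" using I finite_subset by blast
  have V: "V \<subseteq> {1..n}" using I True by (auto simp: V_def)
  have finV: "finite V" using V finite_subset by blast
  have "card (offset_perms n I w) \<le> card {1..n} ^ card (V - I) * fact (card {1..n} - card V)"
    unfolding offset_perms_def
  proof (rule card_permutes_determined_le[OF _ V])
    fix \<pi> \<pi>' assume "\<forall>x\<in>V. \<pi> x = \<pi>' x" "\<forall>i\<in>I. realises_offset n \<pi> i (w i)"
    then show "\<forall>i\<in>I. realises_offset n \<pi>' i (w i)" by (auto simp: V_def realises_offset_def)
  next
    fix \<pi> \<pi>' assume "\<forall>i\<in>I. realises_offset n \<pi> i (w i)" "\<forall>i\<in>I. realises_offset n \<pi>' i (w i)"
      and agree: "\<forall>x\<in>V - I. \<pi> x = \<pi>' x"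
    then have "\<forall>i\<in>I. \<pi> i = \<pi>' i"
      by (intro realised_offsets_agree[OF finI pos]) (auto simp: V_def)
    then show "\<forall>x\<in>V. \<pi> x = \<pi>' x" using agree by blast
  qed auto
  also have "\<dots> = n ^ (card V - m) * fact (n - card V)"
    using m finI finV by (simp add: card_Diff_subset V_def)
  also have "\<dots> \<le> n ^ m * fact (n - 2 * m)"
  proof -
    have mV: "m \<le> card V" using m card_mono[OF finV, of I] by (auto simp: V_def)
    have "card V \<le> 2 * m"
      using card_Un_le[of I "(\<lambda>i. i + fst (w i)) ` I"] card_image_le[OF finI, of "\<lambda>i. i + fst (w i)"] m
      by (simp add: V_def)
    have "n ^ m * (n ^ (card V - m) * fact (n - card V)) = n ^ card V * fact (n - card V)"
      using mV by (simp add: power_add[symmetric])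
    also have "\<dots> \<le> n ^ (2 * m) * fact (n - 2 * m)"
      by (rule power_mult_fact_diff_mono) fact+
    also have "\<dots> = n ^ m * (n ^ m * fact (n - 2 * m))" by (simp add: mult_2 power_add)
    finally show ?thesis using mn by (cases "n = 0") auto
  qed
  finally show ?thesis .
qed

lemma card_Xev_le_sum_offset_perms:
  assumes I: "finite I"
  shows "card {\<pi>. \<pi> permutes {1..n} \<and> (\<forall>i\<in>I. Xev n d \<pi> i)}
         \<le> (\<Sum>w\<in>I \<rightarrow>\<^sub>E offsets d. card (offset_perms n I w))"
proof -
  have fin: "finite (I \<rightarrow>\<^sub>E offsets d)" using I finite_offsets by (simp add: finite_PiE)
  have "{\<pi>. \<pi> permutes {1..n} \<and> (\<forall>i\<in>I. Xev n d \<pi> i)} \<subseteq> (\<Union>w\<in>I \<rightarrow>\<^sub>E offsets d. offset_perms n I w)"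
  proof
    fix \<pi> assume "\<pi> \<in> {\<pi>. \<pi> permutes {1..n} \<and> (\<forall>i\<in>I. Xev n d \<pi> i)}"
    then have \<pi>: "\<pi> permutes {1..n}" "\<forall>i\<in>I. \<exists>w\<in>offsets d. realises_offset n \<pi> i w"
      using Xev_iff_ex_offset by auto
    then obtain w where "\<forall>i\<in>I. w i \<in> offsets d \<and> realises_offset n \<pi> i (w i)" by metis
    then have "restrict w I \<in> I \<rightarrow>\<^sub>E offsets d" "\<pi> \<in> offset_perms n I (restrict w I)"
      using \<pi>(1) by (auto simp: offset_perms_def)
    then show "\<pi> \<in> (\<Union>w\<in>I \<rightarrow>\<^sub>E offsets d. offset_perms n I w)" by blast
  qed
  then have "card {\<pi>. \<pi> permutes {1..n} \<and> (\<forall>i\<in>I. Xev n d \<pi> i)}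
      \<le> card (\<Union>w\<in>I \<rightarrow>\<^sub>E offsets d. offset_perms n I w)"
    by (intro card_mono) (auto intro: finite_offset_perms fin)
  also have "\<dots> \<le> (\<Sum>w\<in>I \<rightarrow>\<^sub>E offsets d. card (offset_perms n I w))" by (rule card_UN_le[OF fin])
  finally show ?thesis .
qed

lemma card_Xev_le:
  fixes n :: nat
  assumes I: "I \<subseteq> {1..n}" and m: "card I = m" and mn: "2 * m \<le> n"
  shows "card {\<pi>. \<pi> permutes {1..n} \<and> (\<forall>i\<in>I. Xev n d \<pi> i)} \<le> (d * d + d) ^ m * (n ^ m * fact (n - 2 * m))"
proof -
  have finI: "finite I" using I finite_subset by blast
  have "(\<Sum>w\<in>I \<rightarrow>\<^sub>E offsets d. card (offset_perms n I w)) \<le> (\<Sum>w\<in>I \<rightarrow>\<^sub>E offsets d. n ^ m * fact (n - 2 * m))"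
    by (intro sum_mono card_offset_perms_le[OF I _ m mn]) (metis PiE_mem offsets_bounds One_nat_def)
  also have "\<dots> = (d * d + d) ^ m * (n ^ m * fact (n - 2 * m))"
    using finI m by (simp add: card_PiE card_offsets)
  finally show ?thesis using card_Xev_le_sum_offset_perms[OF finI, of n d] by simp
qed

section \<open>A Bonferroni-type lower bound\<close>

lemma prod_minus_sum_le_indicator:
  assumes "finite I"
  shows "(\<Prod>i\<in>I. real (N i)) - (\<Sum>k\<in>I. (real (N k) - 1) * (\<Prod>i\<in>I. real (N i)))
         \<le> (if \<forall>i\<in>I. N i \<ge> 1 then 1 else 0)"
proof (cases "\<exists>i\<in>I. N i = 0")
  case True
  then have "(\<Prod>i\<in>I. real (N i)) = 0" using assms by (auto simp: prod_zero_iff)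
  then show ?thesis by simp
next
  case False
  then have all: "\<forall>i\<in>I. N i \<ge> 1" by (simp add: Suc_le_eq)
  have P1: "(\<Prod>i\<in>I. real (N i)) \<ge> 1" using all by (intro prod_ge_1) auto
  show ?thesis
  proof (cases "\<exists>k\<in>I. N k \<ge> 2")
    case True
    then obtain k where k: "k \<in> I" "N k \<ge> 2" by blast
    have "(real (N k) - 1) * (\<Prod>i\<in>I. real (N i)) \<le> (\<Sum>k\<in>I. (real (N k) - 1) * (\<Prod>i\<in>I. real (N i)))"
      by (rule member_le_sum[OF k(1)]) (use all P1 assms in auto)
    moreover have "(\<Prod>i\<in>I. real (N i)) \<le> (real (N k) - 1) * (\<Prod>i\<in>I. real (N i))"
      using k(2) P1 by (simp add: mult_le_cancel_right1)
    ultimately show ?thesis using all by simp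
  next
    case False
    then have "\<forall>i\<in>I. N i = 1" using all by force
    then show ?thesis by simp
  qed
qed

lemma sum_indicator_eq_card:
  "finite P \<Longrightarrow> (\<Sum>x\<in>P. if Q x then 1 else 0 :: real) = real (card {x\<in>P. Q x})"
  by (simp add: sum.If_cases Int_def conj_commute)

lemma prod_card_eq_sum_PiE:
  assumes "finite I" "finite S"
  shows "(\<Prod>i\<in>I. real (card {u\<in>S. Q i u})) = (\<Sum>w\<in>I \<rightarrow>\<^sub>E S. if \<forall>i\<in>I. Q i (w i) then 1 else 0)"
proof -
  have "PiE I (\<lambda>i. {u\<in>S. Q i u}) = {w\<in>I \<rightarrow>\<^sub>E S. \<forall>i\<in>I. Q i (w i)}"
    by (auto simp: PiE_def Pi_def)
  then have "(\<Prod>i\<in>I. card {u\<in>S. Q i u}) = card {w\<in>I \<rightarrow>\<^sub>E S. \<forall>i\<in>I. Q i (w i)}"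
    using card_PiE[OF assms(1), of "\<lambda>i. {u\<in>S. Q i u}"] by simp
  then show ?thesis
    using sum_indicator_eq_card[of "I \<rightarrow>\<^sub>E S"] assms by (simp add: finite_PiE flip: of_nat_prod)
qed

definition offset_perms_extra ::
    "nat \<Rightarrow> nat set \<Rightarrow> (nat \<Rightarrow> nat \<times> int) \<Rightarrow> nat \<Rightarrow> nat \<times> int \<Rightarrow> (nat \<Rightarrow> nat) set" where
  "offset_perms_extra n I w k u =
     {\<pi>. \<pi> permutes {1..n} \<and> (\<forall>i\<in>I. realises_offset n \<pi> i (w i)) \<and> realises_offset n \<pi> k u}"

definition offset_count :: "nat \<Rightarrow> nat \<Rightarrow> (nat \<Rightarrow> nat) \<Rightarrow> nat \<Rightarrow> nat" where
  "offset_count n d \<pi> i = card {u\<in>offsets d. realises_offset n \<pi> i u}"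

lemma Xev_iff_offset_count:
  assumes "\<pi> permutes {1..n}"
  shows "(\<forall>i\<in>I. Xev n d \<pi> i) \<longleftrightarrow> (\<forall>i\<in>I. offset_count n d \<pi> i \<ge> 1)"
proof -
  have "Xev n d \<pi> i \<longleftrightarrow> offset_count n d \<pi> i \<ge> 1" for i
    unfolding Xev_iff_ex_offset[OF assms] offset_count_def using finite_offsets[of d]
    by (auto simp: Suc_le_eq card_gt_0_iff)
  then show ?thesis by simp
qed

lemma sum_prod_offset_count:
  assumes I: "finite I"
  shows "(\<Sum>\<pi>\<in>{\<pi>. \<pi> permutes {1..n}}. \<Prod>i\<in>I. real (offset_count n d \<pi> i))
       = (\<Sum>w\<in>I \<rightarrow>\<^sub>E offsets d. real (card (offset_perms n I w)))"
proof -
  have fP: "finite {\<pi>. \<pi> permutes {1..n}}" by (rule finite_permutations) simp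
  have "(\<Sum>\<pi>\<in>{\<pi>. \<pi> permutes {1..n}}. \<Prod>i\<in>I. real (offset_count n d \<pi> i))
      = (\<Sum>\<pi>\<in>{\<pi>. \<pi> permutes {1..n}}. \<Sum>w\<in>I \<rightarrow>\<^sub>E offsets d. if \<forall>i\<in>I. realises_offset n \<pi> i (w i) then 1 else 0)"
    unfolding offset_count_def by (rule sum.cong[OF refl], rule prod_card_eq_sum_PiE[OF I finite_offsets])
  also have "\<dots> = (\<Sum>w\<in>I \<rightarrow>\<^sub>E offsets d. \<Sum>\<pi>\<in>{\<pi>. \<pi> permutes {1..n}}. if \<forall>i\<in>I. realises_offset n \<pi> i (w i) then 1 else 0)"
    by (rule sum.swap)
  also have "\<dots> = (\<Sum>w\<in>I \<rightarrow>\<^sub>E offsets d. real (card (offset_perms n I w)))"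
    by (rule sum.cong[OF refl], subst sum_indicator_eq_card[OF fP]) (simp add: offset_perms_def)
  finally show ?thesis .
qed

lemma excess_offset_count_eq:
  assumes I: "finite I" and k: "k \<in> I"
  shows "(real (offset_count n d \<pi> k) - 1) * (\<Prod>i\<in>I. real (offset_count n d \<pi> i))
       = (\<Sum>w\<in>I \<rightarrow>\<^sub>E offsets d. \<Sum>u\<in>offsets d - {w k}.
            if (\<forall>i\<in>I. realises_offset n \<pi> i (w i)) \<and> realises_offset n \<pi> k u then 1 else 0)"
proof -
  have "(real (offset_count n d \<pi> k) - 1) * (\<Prod>i\<in>I. real (offset_count n d \<pi> i))
      = (\<Sum>w\<in>I \<rightarrow>\<^sub>E offsets d. (real (offset_count n d \<pi> k) - 1) *
           (if \<forall>i\<in>I. realises_offset n \<pi> i (w i) then 1 else 0))"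
    unfolding offset_count_def by (subst prod_card_eq_sum_PiE[OF I finite_offsets]) (simp add: sum_distrib_left)
  also have "\<dots> = (\<Sum>w\<in>I \<rightarrow>\<^sub>E offsets d. \<Sum>u\<in>offsets d - {w k}.
      if (\<forall>i\<in>I. realises_offset n \<pi> i (w i)) \<and> realises_offset n \<pi> k u then 1 else 0)"
  proof (rule sum.cong[OF refl])
    fix w assume w: "w \<in> I \<rightarrow>\<^sub>E offsets d"
    show "(real (offset_count n d \<pi> k) - 1) * (if \<forall>i\<in>I. realises_offset n \<pi> i (w i) then 1 else 0)
        = (\<Sum>u\<in>offsets d - {w k}. if (\<forall>i\<in>I. realises_offset n \<pi> i (w i)) \<and> realises_offset n \<pi> k u then 1 else 0)"
    proof (cases "\<forall>i\<in>I. realises_offset n \<pi> i (w i)")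
      case True
      define U where "U = {u\<in>offsets d. realises_offset n \<pi> k u}"
      have U: "finite U" "w k \<in> U" using True k w finite_offsets by (auto simp: U_def)
      then have "card U \<ge> 1" by (metis One_nat_def card_gt_0_iff empty_iff less_eq_Suc_le)
      then have "real (card (U - {w k})) = real (offset_count n d \<pi> k) - 1"
        using U by (simp add: U_def offset_count_def card_Diff_singleton of_nat_diff)
      moreover have "{u\<in>offsets d - {w k}. realises_offset n \<pi> k u} = U - {w k}" by (auto simp: U_def)
      ultimately show ?thesis
        using True finite_offsets by (simp add: sum_indicator_eq_card)
    next
      case False
      then show ?thesis by (simp add: sum.neutral del: ball_simps)
    qed
  qed
  finally show ?thesis .
qed

lemma sum_excess_offset_count:
  assumes I: "finite I" and k: "k \<in> I"
  shows "(\<Sum>\<pi>\<in>{\<pi>. \<pi> permutes {1..n}}. (real (offset_count n d \<pi> k) - 1) * (\<Prod>i\<in>I. real (offset_count n d \<pi> i)))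
       = (\<Sum>w\<in>I \<rightarrow>\<^sub>E offsets d. \<Sum>u\<in>offsets d - {w k}. real (card (offset_perms_extra n I w k u)))"
proof -
  have fP: "finite {\<pi>. \<pi> permutes {1..n}}" by (rule finite_permutations) simp
  have "(\<Sum>\<pi>\<in>{\<pi>. \<pi> permutes {1..n}}. (real (offset_count n d \<pi> k) - 1) * (\<Prod>i\<in>I. real (offset_count n d \<pi> i)))
      = (\<Sum>w\<in>I \<rightarrow>\<^sub>E offsets d. \<Sum>u\<in>offsets d - {w k}. \<Sum>\<pi>\<in>{\<pi>. \<pi> permutes {1..n}}.
           if (\<forall>i\<in>I. realises_offset n \<pi> i (w i)) \<and> realises_offset n \<pi> k u then 1 else 0)"
    unfolding excess_offset_count_eq[OF I k] by (subst sum.swap) (intro sum.cong refl sum.swap)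
  also have "\<dots> = (\<Sum>w\<in>I \<rightarrow>\<^sub>E offsets d. \<Sum>u\<in>offsets d - {w k}. real (card (offset_perms_extra n I w k u)))"
    by (intro sum.cong refl, subst sum_indicator_eq_card[OF fP]) (simp add: offset_perms_extra_def)
  finally show ?thesis .
qed

text \<open>With N i the number of offsets realised at i, the indicator of \<forall>i\<in>I. N i \<ge> 1 is at least
  \<Prod>N - \<Sum>k (N k - 1) \<Prod>N; summed over all permutations, both terms count permutations realising
  prescribed offsets.\<close>

lemma card_Xev_ge_bonferroni:
  fixes n :: nat
  assumes I: "finite I"
  shows "real (card {\<pi>. \<pi> permutes {1..n} \<and> (\<forall>i\<in>I. Xev n d \<pi> i)})
     \<ge> (\<Sum>w\<in>I \<rightarrow>\<^sub>E offsets d. real (card (offset_perms n I w)))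
       - (\<Sum>k\<in>I. \<Sum>w\<in>I \<rightarrow>\<^sub>E offsets d. \<Sum>u\<in>offsets d - {w k}. real (card (offset_perms_extra n I w k u)))"
proof -
  have fP: "finite {\<pi>. \<pi> permutes {1..n}}" by (rule finite_permutations) simp
  have "real (card {\<pi>. \<pi> permutes {1..n} \<and> (\<forall>i\<in>I. Xev n d \<pi> i)})
      = real (card {\<pi>\<in>{\<pi>. \<pi> permutes {1..n}}. (\<forall>i\<in>I. offset_count n d \<pi> i \<ge> 1)})"
    using Xev_iff_offset_count by (metis (no_types, lifting) mem_Collect_eq)
  also have "\<dots> = (\<Sum>\<pi>\<in>{\<pi>. \<pi> permutes {1..n}}. if \<forall>i\<in>I. offset_count n d \<pi> i \<ge> 1 then 1 else 0)"
    by (rule sum_indicator_eq_card[OF fP, symmetric])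
  also have "\<dots> \<ge> (\<Sum>\<pi>\<in>{\<pi>. \<pi> permutes {1..n}}. (\<Prod>i\<in>I. real (offset_count n d \<pi> i))
          - (\<Sum>k\<in>I. (real (offset_count n d \<pi> k) - 1) * (\<Prod>i\<in>I. real (offset_count n d \<pi> i))))"
    by (rule sum_mono, rule prod_minus_sum_le_indicator[OF I])
  also have "(\<Sum>\<pi>\<in>{\<pi>. \<pi> permutes {1..n}}. (\<Prod>i\<in>I. real (offset_count n d \<pi> i))
          - (\<Sum>k\<in>I. (real (offset_count n d \<pi> k) - 1) * (\<Prod>i\<in>I. real (offset_count n d \<pi> i))))
      = (\<Sum>w\<in>I \<rightarrow>\<^sub>E offsets d. real (card (offset_perms n I w)))
       - (\<Sum>k\<in>I. \<Sum>w\<in>I \<rightarrow>\<^sub>E offsets d. \<Sum>u\<in>offsets d - {w k}. real (card (offset_perms_extra n I w k u)))"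
  proof -
    have "(\<Sum>\<pi>\<in>{\<pi>. \<pi> permutes {1..n}}. \<Sum>k\<in>I. (real (offset_count n d \<pi> k) - 1) * (\<Prod>i\<in>I. real (offset_count n d \<pi> i)))
        = (\<Sum>k\<in>I. \<Sum>\<pi>\<in>{\<pi>. \<pi> permutes {1..n}}. (real (offset_count n d \<pi> k) - 1) * (\<Prod>i\<in>I. real (offset_count n d \<pi> i)))"
      by (rule sum.swap)
    also have "\<dots> = (\<Sum>k\<in>I. \<Sum>w\<in>I \<rightarrow>\<^sub>E offsets d. \<Sum>u\<in>offsets d - {w k}. real (card (offset_perms_extra n I w k u)))"
      by (rule sum.cong[OF refl], rule sum_excess_offset_count[OF I])
    finally show ?thesis by (simp only: sum_subtractf sum_prod_offset_count[OF I])
  qed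
  finally show ?thesis .
qed

section \<open>Lower bound for spread index sets\<close>

definition spread :: "nat \<Rightarrow> nat \<Rightarrow> nat set \<Rightarrow> bool" where
  "spread n d I \<longleftrightarrow> (\<forall>i\<in>I. 1 \<le> i \<and> i + d + 1 \<le> n) \<and> (\<forall>i\<in>I. \<forall>i'\<in>I. i < i' \<longrightarrow> i + d + 1 < i')"

lemma spread_finite: "spread n d I \<Longrightarrow> finite I"
  by (rule finite_subset[of I "{1..n}"]) (auto simp: spread_def)

lemma spread_target_eq:
  assumes "spread n d I" "i \<in> I" "i' \<in> I" "1 \<le> a" "a \<le> d+1" "1 \<le> a'" "a' \<le> d+1" "i + a = i' + a'"
  shows "i = i'"
proof (rule ccontr)
  assume "i \<noteq> i'"
  then consider "i < i'" | "i' < i" by arith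
  then show False
  proof cases
    case 1
    then have "i + d + 1 < i'" using assms(1-3) unfolding spread_def by blast
    then show False using assms(4-8) by linarith
  next
    case 2
    then have "i' + d + 1 < i" using assms(1-3) unfolding spread_def by blast
    then show False using assms(4-8) by linarith
  qed
qed

lemma spread_target_notin:
  assumes "spread n d I" "i \<in> I" "1 \<le> a" "a \<le> d+1"
  shows "i + a \<notin> I"
proof
  assume h: "i + a \<in> I"
  have "i < i + a" using assms by simp
  then have "i + d + 1 < i + a" using assms(1,2) h unfolding spread_def by blast
  then show False using assms by simp
qed

definition colliding :: "nat set \<Rightarrow> (nat \<Rightarrow> nat \<times> int) \<Rightarrow> (nat \<Rightarrow> nat) \<Rightarrow> bool" where
  "colliding I w g \<longleftrightarrow> (\<exists>i\<in>I. \<exists>i'\<in>I. i \<noteq> i' \<and>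
     (int (g i) = int (g i') \<or> int (g i) = int (g i') + snd (w i')
      \<or> int (g i) + snd (w i) = int (g i') + snd (w i')))"

lemma card_PiE_shift_le:
  assumes I: "finite I" and S: "finite S" and i: "i \<in> I" and i': "i' \<in> I" and ne: "i \<noteq> i'"
  shows "card {g\<in>PiE I (\<lambda>_. S). int (g i) = int (g i') + c} \<le> card S ^ (card I - 1)"
proof -
  have "card {g\<in>PiE I (\<lambda>_. S). int (g i) = int (g i') + c} \<le> card (PiE (I - {i}) (\<lambda>_. S))"
  proof (rule card_inj_on_le[where f="\<lambda>g. restrict g (I - {i})"])
    show "inj_on (\<lambda>g. restrict g (I - {i})) {g\<in>PiE I (\<lambda>_. S). int (g i) = int (g i') + c}"
    proof (rule inj_onI)
      fix g g' assume g: "g \<in> {g\<in>PiE I (\<lambda>_. S). int (g i) = int (g i') + c}"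
        and g': "g' \<in> {g\<in>PiE I (\<lambda>_. S). int (g i) = int (g i') + c}"
        and eq: "restrict g (I - {i}) = restrict g' (I - {i})"
      have a: "\<forall>x\<in>I - {i}. g x = g' x"
      proof
        fix x assume x: "x \<in> I - {i}"
        have "restrict g (I - {i}) x = restrict g' (I - {i}) x" using eq by simp
        then show "g x = g' x" using x by simp
      qed
      then have "g i' = g' i'" using i' ne by simp
      then have "g i = g' i" using g g' by simp
      then have "\<forall>x\<in>I. g x = g' x" using a by blast
      then show "g = g'" using g g' by (auto intro: PiE_ext)
    qed
    show "(\<lambda>g. restrict g (I - {i})) ` {g\<in>PiE I (\<lambda>_. S). int (g i) = int (g i') + c} \<subseteq> PiE (I - {i}) (\<lambda>_. S)"
      by (auto simp: PiE_def Pi_def)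
    show "finite (PiE (I - {i}) (\<lambda>_. S))" using I S by (simp add: finite_PiE)
  qed
  also have "\<dots> = card S ^ (card I - 1)" using I i by (simp add: card_PiE)
  finally show ?thesis .
qed

lemma card_colliding_le:
  assumes I: "finite I" and m: "card I = m" and S: "finite S"
  shows "card {g\<in>I \<rightarrow>\<^sub>E S. colliding I w g} \<le> 3 * m ^ 2 * card S ^ (m - 1)"
proof -
  define B where "B i i' c = {g\<in>I \<rightarrow>\<^sub>E S. int (g i) = int (g i') + c}" for i i' c
  define C where "C i i' = {0, snd (w i'), snd (w i') - snd (w i)}" for i i'
  have "{g\<in>I \<rightarrow>\<^sub>E S. colliding I w g} \<subseteq> (\<Union>i\<in>I. \<Union>i'\<in>I - {i}. \<Union>c\<in>C i i'. B i i' c)"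
    unfolding colliding_def B_def C_def by (auto simp: algebra_simps)
  then have "card {g\<in>I \<rightarrow>\<^sub>E S. colliding I w g} \<le> card (\<Union>i\<in>I. \<Union>i'\<in>I - {i}. \<Union>c\<in>C i i'. B i i' c)"
    using I S by (intro card_mono) (auto simp: B_def C_def finite_PiE)
  also have "\<dots> \<le> (\<Sum>i\<in>I. \<Sum>i'\<in>I - {i}. \<Sum>c\<in>C i i'. card (B i i' c))"
    using I by (intro order.trans[OF card_UN_le] sum_mono card_UN_le) (auto simp: C_def)
  also have "\<dots> \<le> (\<Sum>i\<in>I. \<Sum>i'\<in>I - {i}. 3 * card S ^ (m - 1))"
  proof (intro sum_mono)
    fix i i' assume "i \<in> I" "i' \<in> I - {i}"
    then have "(\<Sum>c\<in>C i i'. card (B i i' c)) \<le> (\<Sum>c\<in>C i i'. card S ^ (m - 1))"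
      using card_PiE_shift_le[OF I S] m by (intro sum_mono) (auto simp: B_def)
    also have "\<dots> = card (C i i') * card S ^ (m - 1)" by simp
    also have "card (C i i') \<le> 3"
      using card_length[of "[0, snd (w i'), snd (w i') - snd (w i)]"] by (simp add: C_def)
    finally show "(\<Sum>c\<in>C i i'. card (B i i' c)) \<le> 3 * card S ^ (m - 1)" by simp
  qed
  also have "\<dots> = m * (m - 1) * (3 * card S ^ (m - 1))" using I m by (simp add: card_Diff_subset)
  also have "\<dots> \<le> 3 * m ^ 2 * card S ^ (m - 1)" by (simp add: power2_eq_square)
  finally show ?thesis .
qed

lemma card_noncolliding_ge:
  assumes I: "finite I" and m: "card I = m" and S: "finite S"
  shows "real (card {g\<in>I \<rightarrow>\<^sub>E S. \<not> colliding I w g}) \<ge> real (card S) ^ m - 3 * real m ^ 2 * real (card S) ^ (m - 1)"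
proof -
  have "card (I \<rightarrow>\<^sub>E S) = card {g\<in>I \<rightarrow>\<^sub>E S. \<not> colliding I w g} + card {g\<in>I \<rightarrow>\<^sub>E S. colliding I w g}"
    using I S by (subst card_Un_disjoint[symmetric]) (auto simp: finite_PiE intro: arg_cong[where f = card])
  then have "real (card S) ^ m = real (card {g\<in>I \<rightarrow>\<^sub>E S. \<not> colliding I w g}) + real (card {g\<in>I \<rightarrow>\<^sub>E S. colliding I w g})"
    using I m by (simp add: card_PiE flip: of_nat_add of_nat_power)
  moreover have "real (card {g\<in>I \<rightarrow>\<^sub>E S. colliding I w g}) \<le> 3 * real m ^ 2 * real (card S) ^ (m - 1)"
  proof -
    have "real (card {g\<in>I \<rightarrow>\<^sub>E S. colliding I w g}) \<le> real (3 * m ^ 2 * card S ^ (m - 1))"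
      using card_colliding_le[OF I m S, of w] by (simp only: of_nat_le_iff)
    then show ?thesis by simp
  qed
  ultimately show ?thesis by linarith
qed

context
  fixes n d :: nat and I :: "nat set" and w :: "nat \<Rightarrow> nat \<times> int"
  assumes spread: "spread n d I" and w: "w \<in> I \<rightarrow>\<^sub>E offsets d"
begin

private lemma w_bounds: "i \<in> I \<Longrightarrow> 1 \<le> fst (w i) \<and> fst (w i) \<le> d + 1 \<and> snd (w i) \<noteq> 0 \<and> \<bar>snd (w i)\<bar> \<le> int d"
  using offsets_bounds PiE_mem[OF w] by blast

private lemma target_le: "i \<in> I \<Longrightarrow> 1 \<le> i \<and> i + fst (w i) \<le> n"
  using spread w_bounds[of i] by (auto simp: spread_def)

private lemma targets_subset: "I \<union> (\<lambda>i. i + fst (w i)) ` I \<subseteq> {1..n}"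
proof -
  have "i \<in> {1..n} \<and> i + fst (w i) \<in> {1..n}" if "i \<in> I" for i
    using target_le[OF that] by auto
  then show ?thesis by blast
qed

private lemma inj_on_target: "inj_on (\<lambda>i. i + fst (w i)) I"
  by (rule inj_onI) (use spread_target_eq[OF spread] w_bounds in blast)

private lemma target_notin: "i \<in> I \<Longrightarrow> i + fst (w i) \<notin> I"
  using spread_target_notin[OF spread] w_bounds by blast

private lemma card_targets: "card (I \<union> (\<lambda>i. i + fst (w i)) ` I) = 2 * card I"
  using spread_finite[OF spread] inj_on_target target_notin
  by (subst card_Un_disjoint) (auto simp: card_image)

lemma card_offset_perms_extra_le:
  assumes k: "k \<in> I" and u: "u \<in> offsets d - {w k}" and m: "card I = m"
  shows "card (offset_perms_extra n I w k u) \<le> n ^ m * fact (n - (2 * m + 1))"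
proof (cases "fst u = fst (w k)")
  case True
  then have "offset_perms_extra n I w k u = {}"
    using k u by (auto simp: offset_perms_extra_def realises_offset_def prod_eq_iff)
  then show ?thesis by simp
next
  case False
  define J where "J = (\<lambda>i. i + fst (w i)) ` I"
  define x where "x = k + fst u"
  define V where "V = insert x (I \<union> J)"
  have u_bounds: "1 \<le> fst u \<and> fst u \<le> d + 1" using u offsets_bounds by blast
  have V: "V \<subseteq> {1..n}"
    using target_le k u_bounds spread by (fastforce simp: V_def J_def x_def spread_def)
  have "x \<notin> I" using spread_target_notin[OF spread k] u_bounds by (simp add: x_def)
  moreover have "x \<notin> J"
    using spread_target_eq[OF spread k] u_bounds w_bounds False by (force simp: J_def x_def)
  ultimately have cV: "card V = 2 * m + 1"
    using card_targets m spread_finite[OF spread] by (simp add: V_def J_def)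
  have "card (offset_perms_extra n I w k u) \<le> card {1..n} ^ card J * fact (card {1..n} - card V)"
    unfolding offset_perms_extra_def
  proof (rule card_permutes_determined_le[OF _ V])
    fix \<pi> \<pi>' assume "\<forall>y\<in>V. \<pi> y = \<pi>' y"
      "(\<forall>i\<in>I. realises_offset n \<pi> i (w i)) \<and> realises_offset n \<pi> k u"
    then show "(\<forall>i\<in>I. realises_offset n \<pi>' i (w i)) \<and> realises_offset n \<pi>' k u"
      using k by (auto simp: realises_offset_def V_def J_def x_def)
  next
    fix \<pi> \<pi>' assume P: "(\<forall>i\<in>I. realises_offset n \<pi> i (w i)) \<and> realises_offset n \<pi> k u"
      and P': "(\<forall>i\<in>I. realises_offset n \<pi>' i (w i)) \<and> realises_offset n \<pi>' k u"
      and agree: "\<forall>y\<in>J. \<pi> y = \<pi>' y"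
    have eqI: "\<forall>i\<in>I. \<pi> i = \<pi>' i"
      using P P' agree by (force simp: J_def realises_offset_def)
    then have "\<pi> x = \<pi>' x" using P P' k by (auto simp: realises_offset_def x_def)
    then show "\<forall>y\<in>V. \<pi> y = \<pi>' y" using eqI agree by (auto simp: V_def)
  qed (auto simp: V_def)
  also have "card J = m" using inj_on_target m by (simp add: J_def card_image)
  finally show ?thesis using cV by simp
qed

text \<open>For non-colliding g, the 2 m values g i and g i + snd (w i) prescribed on I and its targets
  are distinct, so they extend to a permutation.\<close>

private lemma inj_on_prescribed_values:
  assumes nc: "\<not> colliding I w g" and h_I: "\<And>i. i \<in> I \<Longrightarrow> h i = g i"
    and h_target: "\<And>i. i \<in> I \<Longrightarrow> int (h (i + fst (w i))) = int (g i) + snd (w i)"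
  shows "inj_on h (I \<union> (\<lambda>i. i + fst (w i)) ` I)"
proof (rule inj_onI)
  have distinct: "int (g i) \<noteq> int (g i') \<and> int (g i) \<noteq> int (g i') + snd (w i')
      \<and> int (g i) + snd (w i) \<noteq> int (g i') + snd (w i')" if "i \<in> I" "i' \<in> I" "i \<noteq> i'" for i i'
    using nc that unfolding colliding_def by auto
  fix x y assume "x \<in> I \<union> (\<lambda>i. i + fst (w i)) ` I" "y \<in> I \<union> (\<lambda>i. i + fst (w i)) ` I" and hxy: "h x = h y"
  then consider
    (II) "x \<in> I" "y \<in> I"
  | (IT) i' where "x \<in> I" "i' \<in> I" "y = i' + fst (w i')"
  | (TI) i where "i \<in> I" "y \<in> I" "x = i + fst (w i)"
  | (TT) i i' where "i \<in> I" "i' \<in> I" "x = i + fst (w i)" "y = i' + fst (w i')"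
    by blast
  then show "x = y"
  proof cases
    case II then show ?thesis using distinct[of x y] hxy h_I by auto
  next
    case (IT i') then show ?thesis
      using distinct[of x i'] w_bounds[of i'] hxy h_I h_target[of i'] by (cases "x = i'") auto
  next
    case (TI i) then show ?thesis
      using distinct[of y i] w_bounds[of i] hxy h_I h_target[of i] by (cases "y = i") auto
  next
    case (TT i i') then show ?thesis
      using distinct[of i i'] hxy h_target[of i] h_target[of i'] by (cases "i = i'") auto
  qed
qed

lemma ex_offset_perm_extending:
  assumes g: "g \<in> I \<rightarrow>\<^sub>E {d+1..n-d}" and nc: "\<not> colliding I w g"
  obtains \<pi> where "\<pi> \<in> offset_perms n I w" "\<forall>i\<in>I. \<pi> i = g i"
proof -
  define t where "t i = i + fst (w i)" for i
  define h where "h x = (if x \<in> I then g x else nat (int (g (the_inv_into I t x)) + snd (w (the_inv_into I t x))))" for x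
  define V where "V = I \<union> t ` I"
  have V: "V \<subseteq> {1..n}" using targets_subset by (simp add: V_def t_def[abs_def])
  have "inj_on t I" using inj_on_target by (simp add: t_def[abs_def])
  then have inv_t: "the_inv_into I t (t i) = i" if "i \<in> I" for i
    using that by (simp add: the_inv_into_f_f)
  have g_range: "d + 1 \<le> g i \<and> g i \<le> n - d" if "i \<in> I" for i using g that by auto
  have h_I: "h i = g i" if "i \<in> I" for i using that by (simp add: h_def)
  have h_target: "int (h (t i)) = int (g i) + snd (w i) \<and> 1 \<le> int (g i) + snd (w i)
      \<and> int (g i) + snd (w i) \<le> int n" if i: "i \<in> I" for i
  proof -
    have "t i \<notin> I" using target_notin[OF i] by (simp add: t_def)
    then have "h (t i) = nat (int (g i) + snd (w i))" by (simp add: h_def inv_t[OF i])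
    then show ?thesis using g_range[OF i] w_bounds[OF i] by auto
  qed
  have "inj_on h V"
    unfolding V_def t_def using h_I h_target by (intro inj_on_prescribed_values[OF nc]) (auto simp: t_def)
  moreover have "h ` V \<subseteq> {1..n}"
  proof (rule image_subsetI)
    fix x assume "x \<in> V"
    then consider "x \<in> I" | i where "i \<in> I" "x = t i" unfolding V_def by blast
    then show "h x \<in> {1..n}"
    proof cases
      case 1 then show ?thesis using g_range h_I by force
    next
      case 2 then show ?thesis using h_target[of i] by auto
    qed
  qed
  ultimately obtain \<pi> where \<pi>: "\<pi> permutes {1..n}" "\<forall>x\<in>V. \<pi> x = h x"
    using permutes_extend_inj_on[OF _ V] by blast
  have "\<pi> i = g i \<and> realises_offset n \<pi> i (w i)" if i: "i \<in> I" for i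
  proof -
    have "\<pi> i = h i" "\<pi> (t i) = h (t i)" using \<pi>(2) i by (auto simp: V_def)
    then show ?thesis
      using h_I[OF i] h_target[OF i] target_le[OF i] by (simp add: realises_offset_def t_def)
  qed
  then show ?thesis using \<pi>(1) by (intro that) (auto simp: offset_perms_def)
qed

lemma card_offset_perms_ge:
  assumes m: "card I = m"
  shows "real (card (offset_perms n I w))
         \<ge> real (card {g\<in>I \<rightarrow>\<^sub>E {d+1..n-d}. \<not> colliding I w g}) * fact (n - 2 * m)"
proof -
  define V where "V = I \<union> (\<lambda>i. i + fst (w i)) ` I"
  define img where "img = (\<lambda>\<pi>. restrict \<pi> V) ` offset_perms n I w"
  have V: "V \<subseteq> {1..n}" using targets_subset by (simp add: V_def)
  have "card (offset_perms n I w) = card img * fact (card {1..n} - card V)"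
    unfolding img_def offset_perms_def
    by (rule card_permutes_restrict_image[OF _ V]) (auto simp: V_def realises_offset_def)
  moreover have "card {g\<in>I \<rightarrow>\<^sub>E {d+1..n-d}. \<not> colliding I w g} \<le> card img"
  proof -
    have "{g\<in>I \<rightarrow>\<^sub>E {d+1..n-d}. \<not> colliding I w g} \<subseteq> (\<lambda>h. restrict h I) ` img"
    proof
      fix g assume "g \<in> {g\<in>I \<rightarrow>\<^sub>E {d+1..n-d}. \<not> colliding I w g}"
      then obtain \<pi> where \<pi>: "\<pi> \<in> offset_perms n I w" "\<forall>i\<in>I. \<pi> i = g i" "g \<in> I \<rightarrow>\<^sub>E {d+1..n-d}"
        using ex_offset_perm_extending by blast
      then have "g = restrict (restrict \<pi> V) I" by (auto simp: V_def fun_eq_iff PiE_def extensional_def)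
      then show "g \<in> (\<lambda>h. restrict h I) ` img" using \<pi>(1) unfolding img_def by blast
    qed
    moreover have "finite img" unfolding img_def by (intro finite_imageI finite_offset_perms)
    ultimately show ?thesis by (meson card_image_le card_mono finite_imageI le_trans)
  qed
  ultimately show ?thesis
    using card_targets m by (simp add: V_def mult_right_mono)
qed

end

lemma sum_card_offset_perms_ge:
  assumes I: "spread n d I" "card I = m"
  shows "(\<Sum>w\<in>I \<rightarrow>\<^sub>E offsets d. real (card (offset_perms n I w)))
         \<ge> real (d * d + d) ^ m * (real (n - 2 * d) ^ m - 3 * real m ^ 2 * real (n - 2 * d) ^ (m - 1))
           * fact (n - 2 * m)"
proof -
  define LB where "LB = real (n - 2 * d) ^ m - 3 * real m ^ 2 * real (n - 2 * d) ^ (m - 1)"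
  have "LB * fact (n - 2 * m) \<le> real (card (offset_perms n I w))" if w: "w \<in> I \<rightarrow>\<^sub>E offsets d" for w
  proof -
    have "LB \<le> real (card {g\<in>I \<rightarrow>\<^sub>E {d+1..n-d}. \<not> colliding I w g})"
      using card_noncolliding_ge[OF spread_finite[OF I(1)] I(2), of "{d+1..n-d}" w] by (simp add: LB_def mult_2)
    then have "LB * fact (n - 2 * m) \<le> real (card {g\<in>I \<rightarrow>\<^sub>E {d+1..n-d}. \<not> colliding I w g}) * fact (n - 2 * m)"
      by (rule mult_right_mono) simp
    also have "\<dots> \<le> real (card (offset_perms n I w))" by (rule card_offset_perms_ge[OF I(1) w I(2)])
    finally show ?thesis .
  qed
  then have "(\<Sum>w\<in>I \<rightarrow>\<^sub>E offsets d. LB * fact (n - 2 * m)) \<le> (\<Sum>w\<in>I \<rightarrow>\<^sub>E offsets d. real (card (offset_perms n I w)))"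
    by (rule sum_mono)
  then show ?thesis
    using spread_finite[OF I(1)] I(2) by (simp add: LB_def card_PiE card_offsets)
qed

lemma sum_card_offset_perms_extra_le:
  assumes I: "spread n d I" "card I = m"
  shows "(\<Sum>k\<in>I. \<Sum>w\<in>I \<rightarrow>\<^sub>E offsets d. \<Sum>u\<in>offsets d - {w k}. real (card (offset_perms_extra n I w k u)))
         \<le> real m * real (d * d + d) ^ m * real (d * d + d) * (real n ^ m * fact (n - (2 * m + 1)))"
proof -
  define B where "B = real n ^ m * fact (n - (2 * m + 1))"
  have "(\<Sum>u\<in>offsets d - {w k}. real (card (offset_perms_extra n I w k u))) \<le> real (d * d + d) * B"
    if k: "k \<in> I" and w: "w \<in> I \<rightarrow>\<^sub>E offsets d" for k w
  proof -
    have "(\<Sum>u\<in>offsets d - {w k}. real (card (offset_perms_extra n I w k u))) \<le> (\<Sum>u\<in>offsets d - {w k}. B)"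
    proof (intro sum_mono)
      fix u assume "u \<in> offsets d - {w k}"
      then have "card (offset_perms_extra n I w k u) \<le> n ^ m * fact (n - (2 * m + 1))"
        by (rule card_offset_perms_extra_le[OF I(1) w k _ I(2)])
      then have "real (card (offset_perms_extra n I w k u)) \<le> real (n ^ m * fact (n - (2 * m + 1)))"
        by (simp only: of_nat_le_iff)
      then show "real (card (offset_perms_extra n I w k u)) \<le> B" by (simp add: B_def)
    qed
    also have "\<dots> = real (card (offsets d - {w k})) * B" by simp
    also have "\<dots> \<le> real (card (offsets d)) * B"
      using card_mono[OF finite_offsets, of "offsets d - {w k}" d] by (intro mult_right_mono) (auto simp: B_def)
    finally show ?thesis by (simp add: card_offsets)
  qed
  then have "(\<Sum>k\<in>I. \<Sum>w\<in>I \<rightarrow>\<^sub>E offsets d. \<Sum>u\<in>offsets d - {w k}. real (card (offset_perms_extra n I w k u)))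
      \<le> (\<Sum>k\<in>I. \<Sum>w\<in>I \<rightarrow>\<^sub>E offsets d. real (d * d + d) * B)"
    by (intro sum_mono) auto
  then show ?thesis
    using spread_finite[OF I(1)] I(2) by (simp add: B_def card_PiE card_offsets mult_ac)
qed

lemma card_Xev_spread_ge:
  assumes I: "spread n d I" "card I = m"
  shows "real (card {\<pi>. \<pi> permutes {1..n} \<and> (\<forall>i\<in>I. Xev n d \<pi> i)})
     \<ge> real (d * d + d) ^ m * (real (n - 2 * d) ^ m - 3 * real m ^ 2 * real (n - 2 * d) ^ (m - 1))
         * fact (n - 2 * m)
       - real m * real (d * d + d) ^ m * real (d * d + d) * (real n ^ m * fact (n - (2 * m + 1)))"
  using card_Xev_ge_bonferroni[OF spread_finite[OF I(1)], of n d]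
    sum_card_offset_perms_ge[OF I] sum_card_offset_perms_extra_le[OF I] by linarith

lemma non_spread_sets_subset:
  "{I. I \<subseteq> {1..<n} \<and> card I = m \<and> \<not> spread n d I}
   \<subseteq> (\<Union>x\<in>{n-d..<n}. {I. I \<subseteq> {1..<n} \<and> card I = m \<and> x \<in> I})
     \<union> (\<Union>p\<in>Sigma {1..<n} (\<lambda>i. {i+1..i+d+1}). {I. I \<subseteq> {1..<n} \<and> card I = m \<and> fst p \<in> I \<and> snd p \<in> I})"
proof
  fix I assume "I \<in> {I. I \<subseteq> {1..<n} \<and> card I = m \<and> \<not> spread n d I}"
  then have I: "I \<subseteq> {1..<n}" "card I = m" "\<not> spread n d I" by auto
  show "I \<in> (\<Union>x\<in>{n-d..<n}. {I. I \<subseteq> {1..<n} \<and> card I = m \<and> x \<in> I})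
     \<union> (\<Union>p\<in>Sigma {1..<n} (\<lambda>i. {i+1..i+d+1}). {I. I \<subseteq> {1..<n} \<and> card I = m \<and> fst p \<in> I \<and> snd p \<in> I})"
  proof (cases "\<forall>i\<in>I. 1 \<le> i \<and> i + d + 1 \<le> n")
    case False
    then obtain i where "i \<in> I" "\<not> (1 \<le> i \<and> i + d + 1 \<le> n)" by blast
    moreover from this have "i \<in> {n-d..<n}" using I(1) by auto
    ultimately show ?thesis using I by blast
  next
    case True
    then obtain i i' where "i \<in> I" "i' \<in> I" "i < i'" "\<not> i + d + 1 < i'" using I(3) by (auto simp: spread_def)
    moreover from this have "(i, i') \<in> Sigma {1..<n} (\<lambda>i. {i+1..i+d+1})" using I(1) by auto
    ultimately show ?thesis using I by force
  qed
qed

lemma card_non_spread_sets_le: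
  "card {I. I \<subseteq> {1..<n} \<and> card I = m \<and> \<not> spread n d I}
   \<le> d * ((n - 2) choose (m - 1)) + (n - 1) * (d + 1) * (if 2 \<le> m then (n - 3) choose (m - 2) else 0)"
proof -
  define S1 where "S1 x = {I. I \<subseteq> {1..<n} \<and> card I = m \<and> x \<in> I}" for x
  define S2 where "S2 p = {I. I \<subseteq> {1..<n} \<and> card I = m \<and> fst p \<in> I \<and> snd p \<in> I}" for p :: "nat \<times> nat"
  define P where "P = Sigma {1..<n} (\<lambda>i. {i+1..i+d+1})"
  define c1 where "c1 = (n - 2) choose (m - 1)"
  define c2 where "c2 = (if 2 \<le> m then (n - 3) choose (m - 2) else 0)"
  have finP: "finite P" by (simp add: P_def)
  have "card {I. I \<subseteq> {1..<n} \<and> card I = m \<and> \<not> spread n d I} \<le> card ((\<Union>x\<in>{n-d..<n}. S1 x) \<union> (\<Union>p\<in>P. S2 p))"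
    using non_spread_sets_subset[of n m d] finP
    by (intro card_mono) (auto simp: S1_def S2_def P_def intro: finite_subset[OF _ finite_index_sets])
  also have "\<dots> \<le> (\<Sum>x\<in>{n-d..<n}. card (S1 x)) + (\<Sum>p\<in>P. card (S2 p))"
    by (intro order.trans[OF card_Un_le] add_mono card_UN_le finP) simp
  also have "\<dots> \<le> (\<Sum>x\<in>{n-d..<n}. c1) + (\<Sum>p\<in>P. c2)"
    unfolding S1_def S2_def c1_def c2_def
    by (intro add_mono sum_mono card_subsets_containing_point_le card_subsets_containing_pair_le)
      (auto simp: P_def)
  also have "\<dots> \<le> d * c1 + (n - 1) * (d + 1) * c2"
    by (simp add: P_def card_SigmaI) linarith
  finally show ?thesis by (simp only: c1_def c2_def)
qed

lemma card_non_spread_sets_le_real: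
  fixes n m d :: nat
  assumes m1: "1 \<le> m" and n1: "1 \<le> n"
  shows "real (card {I. I \<subseteq> {1..<n} \<and> card I = m \<and> \<not> spread n d I})
    \<le> real n ^ m / fact m * ((real d * real m + real (d+1) * real m ^ 2) / real n)"
proof -
  define c1 where "c1 = (n - 2) choose (m - 1)"
  define c2 where "c2 = (if 2 \<le> m then (n - 3) choose (m - 2) else 0)"
  define Q where "Q = real n ^ m / fact m"
  have Q0: "Q \<ge> 0" by (simp add: Q_def)
  have n0: "real n > 0" using n1 by simp
  have r1: "real c1 \<le> Q * (real m / real n)" unfolding c1_def Q_def by (rule binomial_diff2_le[OF m1 n1])
  have r2: "real c2 \<le> Q * (real m ^ 2 / real n ^ 2)" unfolding c2_def Q_def by (rule binomial_diff3_le[OF n1])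
  have "real (card {I. I \<subseteq> {1..<n} \<and> card I = m \<and> \<not> spread n d I})
      \<le> real d * real c1 + real (n - 1) * real (d + 1) * real c2"
    using card_non_spread_sets_le[of n m d] unfolding c1_def c2_def of_nat_mult[symmetric] of_nat_add[symmetric]
    by (simp only: of_nat_le_iff)
  also have "\<dots> \<le> real d * (Q * (real m / real n)) + real n * real (d + 1) * (Q * (real m ^ 2 / real n ^ 2))"
    using r1 r2 Q0 by (intro add_mono mult_mono mult_left_mono) auto
  also have "\<dots> = Q * ((real d * real m + real (d+1) * real m ^ 2) / real n)"
    using n0 by (simp add: field_simps power2_eq_square)
  finally show ?thesis by (simp add: Q_def)
qed

section \<open>Summing over index sets\<close>

lemma EXI_le:
  fixes n d m :: nat
  assumes I: "I \<subseteq> {1..<n}" "card I = m" and n1: "1 \<le> n" and mn: "4 * real m ^ 2 \<le> real n"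
  shows "EXI n d I \<le> (real (d * d + d) / real n) ^ m * (1 + 8 * real m ^ 2 / real n)"
proof -
  define L where "L = real (d * d + d)"
  have n0: "real n > 0" using n1 by simp
  have m2n: "2 * m \<le> n"
  proof -
    have "real m \<le> real m ^ 2" by (cases m) (auto simp: power2_eq_square)
    then show ?thesis using mn by linarith
  qed
  have "real n ^ m * (real n ^ m * fact (n - 2 * m)) = real n ^ (2 * m) * fact (n - 2 * m)"
    by (simp add: mult_2 power_add)
  also have "\<dots> \<le> fact n * (1 + 8 * real m ^ 2 / real n)"
    using power_mult_fact_diff_le[OF m2n] n0 mn by (simp add: power2_eq_square)
  finally have fact_le: "real n ^ m * fact (n - 2 * m) \<le> fact n * (1 + 8 * real m ^ 2 / real n) / real n ^ m"
    using n0 by (simp add: field_simps)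
  have "real (card {\<pi>. \<pi> permutes {1..n} \<and> (\<forall>i\<in>I. Xev n d \<pi> i)})
      \<le> real ((d * d + d) ^ m * (n ^ m * fact (n - 2 * m)))"
    using card_Xev_le[OF _ I(2) m2n, of d] I(1) by (simp only: of_nat_le_iff) fastforce
  also have "\<dots> = L ^ m * (real n ^ m * fact (n - 2 * m))" by (simp add: L_def)
  also have "\<dots> \<le> L ^ m * (fact n * (1 + 8 * real m ^ 2 / real n) / real n ^ m)"
    by (rule mult_left_mono[OF fact_le]) (simp add: L_def)
  finally show ?thesis
    using n0 by (simp add: EXI_def L_def field_simps power_divide)
qed

lemma Ssum_le:
  fixes n d m :: nat
  assumes n1: "1 \<le> n" and mn: "4 * real m ^ 2 \<le> real n"
  shows "Ssum n d m \<le> real (d * d + d) ^ m / fact m * (1 + 8 * real m ^ 2 / real n)"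
proof -
  define u where "u = (real (d * d + d) / real n) ^ m * (1 + 8 * real m ^ 2 / real n)"
  have "Ssum n d m \<le> (\<Sum>I\<in>{I. I \<subseteq> {1..<n} \<and> card I = m}. u)"
    unfolding Ssum_def u_def by (intro sum_mono EXI_le n1 mn) auto
  also have "\<dots> = real ((n - 1) choose m) * u" by (simp only: sum_constant card_index_sets)
  also have "\<dots> \<le> real n ^ m / fact m * u"
  proof (rule mult_right_mono)
    have "real ((n - 1) choose m) \<le> real (n - 1) ^ m / fact m" by (rule binomial_le_power_div_fact)
    also have "\<dots> \<le> real n ^ m / fact m" by (intro divide_right_mono power_mono) auto
    finally show "real ((n - 1) choose m) \<le> real n ^ m / fact m" .
  qed (simp add: u_def)
  also have "\<dots> = real (d * d + d) ^ m / fact m * (1 + 8 * real m ^ 2 / real n)"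
    using n1 by (simp add: u_def power_divide)
  finally show ?thesis .
qed

lemma d2m2_bounds:
  fixes d m :: nat
  assumes d1: "1 \<le> d" and m1: "1 \<le> m"
  defines "E \<equiv> real d ^ 2 * real m ^ 2"
  shows "real d * real m \<le> E" "real m ^ 2 \<le> E" "real d * real m ^ 2 \<le> E" "real m * real d ^ 2 \<le> E"
    "real m \<le> E" "real d \<le> E"
proof -
  have D: "1 \<le> real d" "real d \<le> real d ^ 2" using d1 by (auto simp: power2_eq_square)
  have M: "1 \<le> real m" "real m \<le> real m ^ 2" using m1 by (auto simp: power2_eq_square)
  show "real d * real m \<le> E" unfolding E_def using D M by (intro mult_mono) auto
  show "real m ^ 2 \<le> E" unfolding E_def using mult_right_mono[of 1 "real d ^ 2" "real m ^ 2"] D by simp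
  show "real d * real m ^ 2 \<le> E" unfolding E_def using D by (intro mult_right_mono) auto
  show "real m * real d ^ 2 \<le> E" unfolding E_def using mult_right_mono[OF M(2), of "real d ^ 2"] by (simp add: mult_ac)
  show "real m \<le> E" unfolding E_def using mult_mono[of 1 "real d ^ 2" "real m" "real m ^ 2"] D M by simp
  show "real d \<le> E" unfolding E_def using mult_mono[of "real d" "real d ^ 2" 1 "real m ^ 2"] D M by simp
qed

lemma spread_main_term_ge:
  fixes n d m :: nat
  assumes d1: "1 \<le> d" and m1: "1 \<le> m" and small: "real d ^ 2 * real m ^ 2 \<le> real n / 100"
  shows "fact n * (real (d * d + d) / real n) ^ m * (1 - 5 * (real d ^ 2 * real m ^ 2 / real n))
         \<le> real (d * d + d) ^ m * (real (n - 2 * d) ^ m - 3 * real m ^ 2 * real (n - 2 * d) ^ (m - 1))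
           * fact (n - 2 * m)"
proof -
  define eps where "eps = real d ^ 2 * real m ^ 2 / real n"
  define L where "L = real (d * d + d)"
  define F where "F = (fact n :: real)"
  define P where "P = (L / real n) ^ m"
  note E = d2m2_bounds[OF d1 m1]
  have n0: "real n > 0" using E(5) small m1 by simp
  have mn: "2 * m + 1 \<le> n" using E(5) small m1 by simp
  have L0: "L \<ge> 0" by (simp add: L_def)
  define X where "X = real (n - 2 * d) ^ m - 3 * real m ^ 2 * real (n - 2 * d) ^ (m - 1)"
  have eps1: "eps \<le> 1 / 100" using small n0 by (simp add: eps_def field_simps)
  have dn: "2 * d \<le> n" using E(6) small by simp
  have "(2 * real d * real m + 3 * real m ^ 2) / real n \<le> 5 * eps"
    using E(1,2) n0 by (simp add: eps_def divide_right_mono)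
  then have "real n ^ m * (1 - 5 * eps) \<le> real n ^ m * (1 - (2 * real d * real m + 3 * real m ^ 2) / real n)"
    by (intro mult_left_mono) auto
  also have "\<dots> \<le> X" unfolding X_def using dn m1 n0 by (intro shifted_power_minus_ge) auto
  finally have X: "real n ^ m * (1 - 5 * eps) \<le> X" .
  moreover have "0 \<le> real n ^ m * (1 - 5 * eps)" using eps1 by simp
  ultimately have X0: "0 \<le> X" by linarith
  have "F \<le> real n ^ (2 * m) * fact (n - 2 * m)"
    unfolding F_def using mn by (intro fact_le_power_mult_fact_diff) simp
  then have f: "F / real n ^ (2 * m) \<le> fact (n - 2 * m)" using n0 by (simp add: field_simps)
  have "L ^ m * (real n ^ m * (1 - 5 * eps)) * (F / real n ^ (2 * m)) \<le> L ^ m * X * fact (n - 2 * m)"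
    using X X0 f L0 eps1 n0 by (intro mult_mono mult_left_mono) (auto simp: F_def)
  moreover have "L ^ m * (real n ^ m * (1 - 5 * eps)) * (F / real n ^ (2 * m)) = F * P * (1 - 5 * eps)"
    using n0 unfolding mult_2 power_add by (simp add: P_def power_divide field_simps)
  ultimately have "F * P * (1 - 5 * eps) \<le> L ^ m * X * fact (n - 2 * m)" by simp
  then show ?thesis by (simp add: F_def P_def L_def X_def eps_def)
qed

lemma spread_error_term_le:
  fixes n d m :: nat
  assumes d1: "1 \<le> d" and m1: "1 \<le> m" and small: "real d ^ 2 * real m ^ 2 \<le> real n / 100"
  shows "real m * real (d * d + d) ^ m * real (d * d + d) * (real n ^ m * fact (n - (2 * m + 1)))
         \<le> fact n * (real (d * d + d) / real n) ^ m * (4 * (real d ^ 2 * real m ^ 2 / real n))"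
proof -
  define eps where "eps = real d ^ 2 * real m ^ 2 / real n"
  define L where "L = real (d * d + d)"
  define F where "F = (fact n :: real)"
  define P where "P = (L / real n) ^ m"
  note E = d2m2_bounds[OF d1 m1]
  have n0: "real n > 0" using E(5) small m1 by simp
  have mn: "2 * m + 1 \<le> n" using E(5) small m1 by simp
  have L0: "L \<ge> 0" by (simp add: L_def)
  have "2 * real (2 * m + 1) ^ 2 \<le> real n"
  proof -
    have "real (2 * m + 1) ^ 2 \<le> (3 * real m) ^ 2" using m1 by (intro power_mono) auto
    then show ?thesis using E(2) small by (simp add: power_mult_distrib)
  qed
  then have "real n ^ (2 * m + 1) * fact (n - (2 * m + 1)) \<le> 2 * F"
    unfolding F_def by (rule power_mult_fact_diff_le_twice[OF mn])
  moreover have "real n ^ (2 * m + 1) = real n ^ (m + 1) * real n ^ m"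
    by (simp add: power_add[symmetric] mult_2)
  ultimately have "real n ^ (m + 1) * (real n ^ m * fact (n - (2 * m + 1))) \<le> 2 * F"
    by (simp only: mult.assoc)
  then have "real n ^ m * fact (n - (2 * m + 1)) \<le> 2 * F / real n ^ (m + 1)"
    using n0 by (simp add: field_simps)
  then have "real m * L ^ m * L * (real n ^ m * fact (n - (2 * m + 1))) \<le> real m * L ^ m * L * (2 * F / real n ^ (m + 1))"
    using L0 by (intro mult_left_mono) auto
  also have "\<dots> = F * P * (2 * real m * L / real n)"
    using n0 by (simp add: P_def power_divide field_simps)
  also have "\<dots> \<le> F * P * (4 * eps)"
  proof (rule mult_left_mono)
    have "L \<le> 2 * real d ^ 2" using d1 by (simp add: L_def power2_eq_square)
    then have "2 * real m * L \<le> 4 * (real m * real d ^ 2)"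
      using mult_left_mono[of L "2 * real d ^ 2" "2 * real m"] by simp
    then show "2 * real m * L / real n \<le> 4 * eps"
      using E(4) n0 by (simp add: eps_def divide_right_mono)
  qed (simp add: F_def P_def L_def)
  finally have "real m * L ^ m * L * (real n ^ m * fact (n - (2 * m + 1))) \<le> F * P * (4 * eps)" .
  then show ?thesis by (simp add: F_def P_def L_def eps_def)
qed

lemma EXI_spread_ge:
  fixes n d m :: nat
  assumes d1: "1 \<le> d" and m1: "1 \<le> m" and small: "real d ^ 2 * real m ^ 2 \<le> real n / 100"
    and I: "spread n d I" "card I = m"
  shows "EXI n d I \<ge> (real (d * d + d) / real n) ^ m * (1 - 9 * (real d ^ 2 * real m ^ 2 / real n))"
proof -
  define eps where "eps = real d ^ 2 * real m ^ 2 / real n"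
  define F where "F = (fact n :: real)"
  define P where "P = (real (d * d + d) / real n) ^ m"
  have "F * P * (1 - 5 * eps) - F * P * (4 * eps) \<le> real (card {\<pi>. \<pi> permutes {1..n} \<and> (\<forall>i\<in>I. Xev n d \<pi> i)})"
    unfolding F_def P_def eps_def
    by (rule order.trans[OF diff_mono card_Xev_spread_ge[OF I]])
      (fact spread_main_term_ge[OF d1 m1 small] spread_error_term_le[OF d1 m1 small])+
  then have "F * (P * (1 - 9 * eps)) \<le> real (card {\<pi>. \<pi> permutes {1..n} \<and> (\<forall>i\<in>I. Xev n d \<pi> i)})"
    by (simp add: algebra_simps)
  then show ?thesis by (simp add: EXI_def F_def P_def eps_def field_simps)
qed

lemma card_spread_sets_ge:
  fixes n d m :: nat
  assumes d1: "1 \<le> d" and m1: "1 \<le> m" and n1: "1 \<le> n"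
    and small: "real d ^ 2 * real m ^ 2 \<le> real n / 100"
  shows "real (card {I. I \<subseteq> {1..<n} \<and> card I = m \<and> spread n d I})
         \<ge> real n ^ m / fact m * (1 - 5 * (real d ^ 2 * real m ^ 2 / real n))"
proof -
  define Q where "Q = real n ^ m / fact m"
  define c where "c = (real d * real m + real (d + 1) * real m ^ 2) / real n"
  define Good where "Good = {I. I \<subseteq> {1..<n} \<and> card I = m \<and> spread n d I}"
  define Bad where "Bad = {I. I \<subseteq> {1..<n} \<and> card I = m \<and> \<not> spread n d I}"
  note E = d2m2_bounds[OF d1 m1]
  have n0: "real n > 0" using n1 by simp
  have "{I. I \<subseteq> {1..<n} \<and> card I = m} = Good \<union> Bad" "Good \<inter> Bad = {}"
    by (auto simp: Good_def Bad_def)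
  moreover have "finite Good" "finite Bad"
    unfolding Good_def Bad_def by (auto intro: finite_subset[OF _ finite_index_sets])
  ultimately have card_sets: "real ((n - 1) choose m) = real (card Good) + real (card Bad)"
    by (metis card_Un_disjoint card_index_sets of_nat_add)
  have binom: "Q * (1 - 2 * real m ^ 2 / real n) \<le> real ((n - 1) choose m)"
  proof -
    have "real (m + 1) ^ 2 \<le> (2 * real m) ^ 2" using m1 by (intro power_mono) auto
    then have sq: "real (m + 1) ^ 2 \<le> real n" using E(2) small by (simp add: power_mult_distrib)
    moreover have "real (m + 1) \<le> real (m + 1) ^ 2" by (simp add: power2_eq_square)
    ultimately have "m + 1 \<le> n" by linarith
    then show ?thesis unfolding Q_def using binomial_pred_ge[OF m1 sq] by simp
  qed
  have bad: "real (card Bad) \<le> Q * c"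
    unfolding Bad_def Q_def c_def by (rule card_non_spread_sets_le_real[OF m1 n1])
  have "2 * real m ^ 2 / real n + c \<le> 5 * (real d ^ 2 * real m ^ 2 / real n)"
    using E(1-3) n0 by (simp add: c_def add_divide_distrib[symmetric] divide_right_mono algebra_simps)
  then have "1 - 5 * (real d ^ 2 * real m ^ 2 / real n) \<le> (1 - 2 * real m ^ 2 / real n) - c" by linarith
  then have "Q * (1 - 5 * (real d ^ 2 * real m ^ 2 / real n)) \<le> Q * ((1 - 2 * real m ^ 2 / real n) - c)"
    by (rule mult_left_mono) (simp add: Q_def)
  also have "\<dots> = Q * (1 - 2 * real m ^ 2 / real n) - Q * c" by (simp only: right_diff_distrib)
  also have "\<dots> \<le> real (card Good)" using binom bad card_sets by linarith
  finally show ?thesis by (simp add: Q_def Good_def)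
qed

lemma Ssum_ge:
  fixes n d m :: nat
  assumes d1: "1 \<le> d" and m1: "1 \<le> m" and n1: "1 \<le> n"
    and small: "real d ^ 2 * real m ^ 2 \<le> real n / 100"
  shows "Ssum n d m \<ge> real (d * d + d) ^ m / fact m * (1 - 14 * (real d ^ 2 * real m ^ 2 / real n))"
proof -
  define eps where "eps = real d ^ 2 * real m ^ 2 / real n"
  define P where "P = (real (d * d + d) / real n) ^ m"
  define Q where "Q = real n ^ m / fact m"
  define Good where "Good = {I. I \<subseteq> {1..<n} \<and> card I = m \<and> spread n d I}"
  have n0: "real n > 0" using n1 by simp
  have eps: "0 \<le> eps" "eps \<le> 1 / 100" using small n0 by (auto simp: eps_def field_simps)
  have P0: "P \<ge> 0" by (simp add: P_def)
  have "Q * (1 - 5 * eps) * (P * (1 - 9 * eps)) \<le> real (card Good) * (P * (1 - 9 * eps))"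
    using card_spread_sets_ge[OF d1 m1 n1 small] P0 eps
    by (intro mult_right_mono) (auto simp: Q_def Good_def eps_def)
  also have "\<dots> = (\<Sum>I\<in>Good. P * (1 - 9 * eps))" by simp
  also have "\<dots> \<le> (\<Sum>I\<in>Good. EXI n d I)"
    using EXI_spread_ge[OF d1 m1 small] by (intro sum_mono) (auto simp: Good_def P_def eps_def)
  also have "\<dots> \<le> Ssum n d m"
    unfolding Ssum_def Good_def
    by (rule sum_mono2[OF finite_index_sets]) (auto simp: EXI_def)
  finally have le: "Q * P * ((1 - 5 * eps) * (1 - 9 * eps)) \<le> Ssum n d m" by (simp add: mult_ac)
  have "1 - 14 * eps \<le> (1 - 5 * eps) * (1 - 9 * eps)"
    using eps by (simp add: algebra_simps)
  then have "Q * P * (1 - 14 * eps) \<le> Q * P * ((1 - 5 * eps) * (1 - 9 * eps))"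
    using P0 by (intro mult_left_mono) (auto simp: Q_def)
  moreover have QP: "Q * P = real (d * d + d) ^ m / fact m"
    using n0 by (simp add: Q_def P_def power_divide)
  ultimately show ?thesis using le unfolding QP[symmetric] eps_def by linarith
qed

lemma Ssum_0: "Ssum n d 0 = 1"
proof -
  have "{I. I \<subseteq> {1..<n} \<and> card I = 0} = {{}}"
    by (auto dest: finite_subset[OF _ finite_atLeastLessThan])
  moreover have "EXI n d {} = 1"
    unfolding EXI_def using card_permutations[of "{1..n}" n] by simp
  ultimately show ?thesis unfolding Ssum_def by simp
qed

lemma Ssum_approx:
  fixes n d m :: nat
  assumes d1: "1 \<le> d" and n1: "1 \<le> n" and small: "real d ^ 2 * real m ^ 2 \<le> real n / 100"
  shows "\<bar>Ssum n d m - (real d ^ 2 + real d) ^ m / fact m\<bar>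
      \<le> 14 * \<bar>real d ^ 2 * real m ^ 2 / real n * ((real d ^ 2 + real d) ^ m / fact m)\<bar>"
proof (cases "m = 0")
  case True
  then show ?thesis by (simp add: Ssum_0)
next
  case False
  then have m1: "1 \<le> m" by simp
  define T where "T = (real d ^ 2 + real d) ^ m / fact m"
  define eps where "eps = real d ^ 2 * real m ^ 2 / real n"
  have T: "real (d * d + d) ^ m / fact m = T" by (simp add: T_def power2_eq_square)
  have "T \<ge> 0" "eps \<ge> 0" by (simp_all add: T_def eps_def)
  have m2: "real m ^ 2 \<le> real d ^ 2 * real m ^ 2" by (rule d2m2_bounds(2)[OF d1 m1])
  then have "8 * real m ^ 2 / real n \<le> 8 * eps"
    unfolding eps_def by (simp add: divide_right_mono)
  then have "T * (8 * real m ^ 2 / real n) \<le> T * (8 * eps)"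
    using \<open>T \<ge> 0\<close> by (rule mult_left_mono)
  moreover have "Ssum n d m \<le> T * (1 + 8 * real m ^ 2 / real n)"
    using Ssum_le[OF n1, of m d] m2 small unfolding T by simp
  ultimately have "Ssum n d m - T \<le> 8 * eps * T" by (simp add: algebra_simps)
  moreover have "T - Ssum n d m \<le> 14 * eps * T"
    using Ssum_ge[OF d1 m1 n1 small] unfolding T eps_def[symmetric] by (simp add: algebra_simps)
  ultimately have "\<bar>Ssum n d m - T\<bar> \<le> 14 * (eps * T)"
    using \<open>T \<ge> 0\<close> \<open>eps \<ge> 0\<close> by (simp add: abs_le_iff)
  then show ?thesis using \<open>T \<ge> 0\<close> \<open>eps \<ge> 0\<close> by (simp add: T_def eps_def)
qed

lemma eventually_d2m2_small:
  fixes d m :: "nat \<Rightarrow> nat"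
  assumes "(\<lambda>n. real (d n)) \<in> O(\<lambda>n. ln (real n))" "(\<lambda>n. real (m n)) \<in> O(\<lambda>n. (ln (real n))^2)"
  shows "eventually (\<lambda>n. real (d n) ^ 2 * real (m n) ^ 2 \<le> real n / 100) at_top"
proof -
  have "(\<lambda>n. real (d n) ^ 2 * real (m n) ^ 2) \<in> O(\<lambda>n. ln (real n) ^ 2 * ((ln (real n))^2) ^ 2)"
    using assms by (intro landau_o.big.mult landau_o.big_power)
  also have "(\<lambda>n::nat. ln (real n) ^ 2 * ((ln (real n))^2) ^ 2) \<in> o(\<lambda>n. real n)" by real_asymp
  finally have "(\<lambda>n. real (d n) ^ 2 * real (m n) ^ 2) \<in> o(\<lambda>n. real n)" .
  then have "eventually (\<lambda>n. norm (real (d n) ^ 2 * real (m n) ^ 2) \<le> 1 / 100 * norm (real n)) at_top"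
    by (rule landau_o.smallD) simp
  then show ?thesis by eventually_elim simp
qed

theorem mainTheorem2:
  fixes d m :: "nat \<Rightarrow> nat"
  assumes dpos: "\<And>n. d n \<ge> 1"
    and dlog: "(\<lambda>n. real (d n)) \<in> O(\<lambda>n. ln (real n))"
    and mlog: "(\<lambda>n. real (m n)) \<in> O(\<lambda>n. (ln (real n))^2)"
  shows "(\<lambda>n. Ssum n (d n) (m n) - (real (d n)^2 + real (d n)) ^ m n / fact (m n))
           \<in> O(\<lambda>n. real (d n)^2 * real (m n)^2 / real n
                    * ((real (d n)^2 + real (d n)) ^ m n / fact (m n)))"
proof (rule bigoI)
  show "eventually (\<lambda>n. norm (Ssum n (d n) (m n) - (real (d n)^2 + real (d n)) ^ m n / fact (m n))
      \<le> 14 * norm (real (d n)^2 * real (m n)^2 / real n * ((real (d n)^2 + real (d n)) ^ m n / fact (m n)))) at_top"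
    using eventually_d2m2_small[OF dlog mlog] eventually_ge_at_top[of 1]
    by eventually_elim (use Ssum_approx dpos in simp)
qed

end
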